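(* Let $\mathcal L$ be a finite relational language, let $E\notin\mathcal L$ be the binary predicate symbol of $T_{\mathrm{Graph}}$, let $J\colon T_{\mathcal L}\leadsto T_{\mathrm{Graph}}\cup T_{\mathcal L}$ be the structure-erasing interpretation (so $J(M)$ is the $\mathcal L$-reduct of $M$), let $\mathcal F$ be a family of models of $T_{\mathrm{Graph}}\cup T_{\mathcal L}$, and let $I\colon T_{\mathrm{Graph}}\leadsto\mathrm{Forb}_{T_{\mathrm{Graph}}\cup T_{\mathcal L}}(\mathcal F\!\uparrow^E)$ act identically on $E$. Then $$\chi(I)=\inf\{\ell\in\mathbb{N}_+:\mathcal P_{\ell,\mathcal L}\subseteq\chi^E_\ell(\mathcal F)\}$$ (with $\inf\varnothing=\infty$). Furthermore, $\chi(I)<\infty$ if and only if $\mathcal P_{1,\mathcal L}\subseteq\mathcal U_1(J(\mathcal F))$, where $J(\mathcal F)=\{J(F):F\in\mathcal F\}$.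
   Context: Structures are finite and canonical (no predicate holds on a tuple with a repeated entry); $V(M)$ is the vertex set, $(V)_k$ the set of injective maps $[k]\to V$, $R_P(M)\subseteq(V(M))_{k(P)}$ the tuples satisfying $P$. $T_{\mathcal L}$: all canonical $\mathcal L$-structures; $T_{\mathrm{Graph}}$: simple graphs over $\{E\}$; models of $T_{\mathrm{Graph}}\cup T_{\mathcal L}$ are graphs with an arbitrary canonical $\mathcal L$-structure on the same vertex set. $\mathcal F\!\uparrow^E$: all models $F'$ of $T_{\mathrm{Graph}}\cup T_{\mathcal L}$ such that for some $F\in\mathcal F$, $V(F')=V(F)$, $R_E(F')\supseteq R_E(F)$, $R_P(F')=R_P(F)$ for $P\in\mathcal L$. $\mathrm{Forb}_T(\mathcal G)$: models of $T$ with no induced substructure isomorphic to a member of $\mathcal G$. $I$ acts identically on $E$, so $I(M)$ is the graph part of $M$. $\chi(I)=\sup(\{\ell\in\mathbb{N}_+:\forall n\ \exists N\in\mathcal M_n[T],\ T_{n,\ell}\subseteq I(N)\}\cup\{0\})+1$, with $\mathcal M_n[T]$ the $n$-vertex models up to isomorphism, $T_{n,\ell}$ the balanced complete $\ell$-partite graph on $n$ vertices, and $G\subseteq H$ meaning an injection mapping edges to edges. An $\ell$-split order over $V$ is $(f,\preceq)$ with $f\colon V\to[\ell]$ and $\preceq$ a reflexive partial order such that $v,w$ are comparable iff $f(v)=f(w)$; $\mathcal S_{\ell,V}$ is the set of these, $\mathcal S_{\ell,k}=\mathcal S_{\ell,[k]}$. For an injection $g$, $w_1\preceq_g w_2\iff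 g(w_1)\preceq g(w_2)$. An $\ell$-Ramsey pattern on $\mathcal L$ is $Q\colon P\mapsto Q_P\subseteq\mathcal S_{\ell,k(P)}$ ($P\in\mathcal L$); $\mathcal P_{\ell,\mathcal L}$ is the set of these. An $\mathcal L$-structure $K$ is $Q$-uniform w.r.t. $(f,\preceq)\in\mathcal S_{\ell,V(K)}$ if $R_P(K)=\{\alpha\in(V(K))_{k(P)}:(f\circ\alpha,\preceq_\alpha)\in Q_P\}$ for all $P\in\mathcal L$; $\mathcal U_\ell(K)$ is the set of $Q$ for which $K$ is $Q$-uniform w.r.t. some $\ell$-split order on $V(K)$, and $\mathcal U_\ell$ of a family is the union. For a model $M$ of $T_{\mathrm{Graph}}\cup T_{\mathcal L}$ and $Q\in\mathcal P_{\ell,\mathcal L}$, an $E$-proper $Q$-split ordering of $M$ is $(f,\preceq)\in\mathcal S_{\ell,V(M)}$ such that $J(M)$ is $Q$-uniform w.r.t. $(f,\preceq)$ and $f$ is a proper coloring of the graph part of $M$. $\chi^E_\ell(M)$ is the set of $Q\in\mathcal P_{\ell,\mathcal L}$ such that $M$ has an $E$-proper $Q$-split ordering, and $\chi^E_\ell(\mathcal F)=\bigcup_{M\in\mathcal F}\chi^E_\ell(M)$. *)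

theory Defs
  imports Main "HOL-Library.Extended_Nat"
begin

text \<open>A predicate symbol of type 'p has arity k P;
  a k-tuple of vertices is a list of length k (index set {0..<k} plays the role of [k]).
  The graph predicate E is kept separately as the field edges (so E is not in L).\<close>

record ('v, 'p) lstr =
  verts :: "'v set"
  rels  :: "'p \<Rightarrow> 'v list set"

record ('v, 'p) gstr = "('v, 'p) lstr" +
  edges :: "('v \<times> 'v) set"

definition inj_tuples :: "'v set \<Rightarrow> nat \<Rightarrow> 'v list set" where
  "inj_tuples V k = {\<alpha>. length \<alpha> = k \<and> distinct \<alpha> \<and> set \<alpha> \<subseteq> V}"

text \<open>Models of T_Graph \<union> T_L (finite, canonical, simple graph on the same vertex set).\<close>
definition is_model :: "'p set \<Rightarrow> ('p \<Rightarrow> nat) \<Rightarrow> ('v, 'p) gstr \<Rightarrow> bool" where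
  "is_model L k M \<longleftrightarrow> finite (verts M)
     \<and> edges M \<subseteq> verts M \<times> verts M \<and> sym (edges M) \<and> irrefl (edges M)
     \<and> (\<forall>P\<in>L. rels M P \<subseteq> inj_tuples (verts M) (k P))
     \<and> (\<forall>P. P \<notin> L \<longrightarrow> rels M P = {})"

definition J :: "('v, 'p) gstr \<Rightarrow> ('v, 'p) lstr" where
  "J M = \<lparr>verts = verts M, rels = rels M\<rparr>"

definition iso :: "('v, 'p) gstr \<Rightarrow> ('w, 'p) gstr \<Rightarrow> bool" where
  "iso M M' \<longleftrightarrow> (\<exists>h. bij_betw h (verts M) (verts M')
     \<and> edges M' = (\<lambda>(x, y). (h x, h y)) ` edges M
     \<and> (\<forall>P. rels M' P = map h ` rels M P))"

definition induced :: "('v, 'p) gstr \<Rightarrow> 'v set \<Rightarrow> ('v, 'p) gstr" where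
  "induced M W = \<lparr>verts = W, rels = (\<lambda>P. {\<alpha>\<in>rels M P. set \<alpha> \<subseteq> W}),
                   edges = edges M \<inter> (W \<times> W)\<rparr>"

text \<open>Forb_{T_Graph \<union> T_L}(G), with models on natural-number vertices
  (every finite structure is isomorphic to one of these).\<close>
definition forb_models :: "'p set \<Rightarrow> ('p \<Rightarrow> nat) \<Rightarrow> ('v, 'p) gstr set \<Rightarrow> (nat, 'p) gstr set" where
  "forb_models L k G = {M. is_model L k M \<and>
     (\<forall>W \<subseteq> verts M. \<forall>F\<in>G. \<not> iso (induced M W) F)}"

definition up_E :: "'p set \<Rightarrow> ('p \<Rightarrow> nat) \<Rightarrow> ('v, 'p) gstr set \<Rightarrow> ('v, 'p) gstr set" where
  "up_E L k Fam = {F'. is_model L k F' \<and> (\<exists>F\<in>Fam. verts F' = verts F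
      \<and> edges F \<subseteq> edges F' \<and> (\<forall>P\<in>L. rels F' P = rels F P))}"

text \<open>T_{n,l} \<subseteq> G : balanced complete l-partite graph on {0..<n} (parts: residues mod l)
  embeds injectively mapping edges to edges.\<close>
definition contains_partite :: "nat \<Rightarrow> nat \<Rightarrow> ('v \<times> 'v) set \<Rightarrow> 'v set \<Rightarrow> bool" where
  "contains_partite n l E V \<longleftrightarrow> (\<exists>g. inj_on g {0..<n} \<and> g ` {0..<n} \<subseteq> V \<and>
     (\<forall>i<n. \<forall>j<n. i mod l \<noteq> j mod l \<longrightarrow> (g i, g j) \<in> E))"

text \<open>chi(I) for I : T_Graph \<leadsto> Forb(F\<up>^E) acting identically on E (so I(N) is the graph part of N).\<close>
definition chi :: "'p set \<Rightarrow> ('p \<Rightarrow> nat) \<Rightarrow> ('v, 'p) gstr set \<Rightarrow> enat" where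
  "chi L k Fam = Sup (enat ` ({l. l \<ge> 1 \<and> (\<forall>n. \<exists>N\<in>forb_models L k (up_E L k Fam).
        card (verts N) = n \<and> contains_partite n l (edges N) (verts N))} \<union> {0})) + 1"

text \<open>l-split orders over V: colouring f : V \<rightarrow> {1..l} (0 outside V, for canonicity) and
  a reflexive partial order r on V whose comparability classes are the colour classes.\<close>
definition split_orders :: "nat \<Rightarrow> 'a set \<Rightarrow> (('a \<Rightarrow> nat) \<times> ('a \<times> 'a) set) set" where
  "split_orders l V = {(f, r). (\<forall>v\<in>V. f v \<in> {1..l}) \<and> (\<forall>v. v \<notin> V \<longrightarrow> f v = 0)
     \<and> r \<subseteq> V \<times> V \<and> refl_on V r \<and> trans r \<and> antisym r
     \<and> (\<forall>v\<in>V. \<forall>w\<in>V. ((v, w) \<in> r \<or> (w, v) \<in> r) \<longleftrightarrow> f v = f w)}"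

definition pull :: "('v \<Rightarrow> nat) \<times> ('v \<times> 'v) set \<Rightarrow> 'v list \<Rightarrow> (nat \<Rightarrow> nat) \<times> (nat \<times> nat) set" where
  "pull s \<alpha> = ((\<lambda>i. if i < length \<alpha> then fst s (\<alpha> ! i) else 0),
               {(i, j). i < length \<alpha> \<and> j < length \<alpha> \<and> (\<alpha> ! i, \<alpha> ! j) \<in> snd s})"

definition ramsey_patterns :: "nat \<Rightarrow> 'p set \<Rightarrow> ('p \<Rightarrow> nat)
     \<Rightarrow> ('p \<Rightarrow> ((nat \<Rightarrow> nat) \<times> (nat \<times> nat) set) set) set" where
  "ramsey_patterns l L k = {Q. (\<forall>P\<in>L. Q P \<subseteq> split_orders l {0..<k P}) \<and> (\<forall>P. P \<notin> L \<longrightarrow> Q P = {})}"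

definition uniform :: "'p set \<Rightarrow> ('p \<Rightarrow> nat) \<Rightarrow> ('v, 'p) lstr
     \<Rightarrow> ('p \<Rightarrow> ((nat \<Rightarrow> nat) \<times> (nat \<times> nat) set) set) \<Rightarrow> ('v \<Rightarrow> nat) \<times> ('v \<times> 'v) set \<Rightarrow> bool" where
  "uniform L k K Q s \<longleftrightarrow> (\<forall>P\<in>L. rels K P = {\<alpha>\<in>inj_tuples (verts K) (k P). pull s \<alpha> \<in> Q P})"

definition U :: "nat \<Rightarrow> 'p set \<Rightarrow> ('p \<Rightarrow> nat) \<Rightarrow> ('v, 'p) lstr
     \<Rightarrow> ('p \<Rightarrow> ((nat \<Rightarrow> nat) \<times> (nat \<times> nat) set) set) set" where
  "U l L k K = {Q\<in>ramsey_patterns l L k. \<exists>s\<in>split_orders l (verts K). uniform L k K Q s}"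

definition U_fam :: "nat \<Rightarrow> 'p set \<Rightarrow> ('p \<Rightarrow> nat) \<Rightarrow> ('v, 'p) lstr set
     \<Rightarrow> ('p \<Rightarrow> ((nat \<Rightarrow> nat) \<times> (nat \<times> nat) set) set) set" where
  "U_fam l L k Ks = (\<Union>K\<in>Ks. U l L k K)"

definition chiE :: "nat \<Rightarrow> 'p set \<Rightarrow> ('p \<Rightarrow> nat) \<Rightarrow> ('v, 'p) gstr
     \<Rightarrow> ('p \<Rightarrow> ((nat \<Rightarrow> nat) \<times> (nat \<times> nat) set) set) set" where
  "chiE l L k M = {Q\<in>ramsey_patterns l L k. \<exists>s\<in>split_orders l (verts M).
      uniform L k (J M) Q s \<and> (\<forall>(x, y)\<in>edges M. fst s x \<noteq> fst s y)}"

definition chiE_fam :: "nat \<Rightarrow> 'p set \<Rightarrow> ('p \<Rightarrow> nat) \<Rightarrow> ('v, 'p) gstr set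
     \<Rightarrow> ('p \<Rightarrow> ((nat \<Rightarrow> nat) \<times> (nat \<times> nat) set) set) set" where
  "chiE_fam l L k Fam = (\<Union>M\<in>Fam. chiE l L k M)"

end

theory Submission
  imports Defs "HOL-Library.Ramsey"
begin

text \<open>
  If some \<open>l\<close>-Ramsey pattern \<open>Q\<close> is realised \<open>E\<close>-properly by no member of \<open>Fam\<close>, then for every
  \<open>n\<close> the \<open>Q\<close>-uniform structure on the complete \<open>l\<close>-partite graph on \<open>n\<close> vertices, whose parts are
  the residues mod \<open>l\<close>, each ordered naturally, avoids \<open>up_E L k Fam\<close>; hence \<open>chi > l\<close>.
  Conversely, suppose every \<open>l\<close>-pattern is realised and \<open>N\<close> contains a large complete
  \<open>l'\<close>-partite graph, \<open>l' \<ge> l\<close>.  Ramsey's theorem applied to an \<open>l \<times> m\<close> grid of positions in it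
  yields a subgrid on which the structure of \<open>N\<close> depends only on the pattern of a tuple.  This
  defines a pattern \<open>Q\<close>; a member of \<open>Fam\<close> realising \<open>Q\<close> properly then occurs in \<open>N\<close> as an induced
  copy of one of its edge-supergraphs, so \<open>N\<close> is not in the forbidden class.  The finiteness
  criterion is the same pair of arguments for \<open>l = 1\<close>, with complete graphs.
\<close>

section \<open>Ramsey's theorem for several colourings\<close>

lemma homogeneous_subset_if_partn_lst:
  fixes H :: "'a set" and c :: "'a set \<Rightarrow> bool"
  assumes N: "partn_lst {..<N} [m, m] r" and H: "finite H" "N \<le> card H"
  shows "\<exists>H'\<subseteq>H. card H' = m \<and> (\<exists>b. \<forall>X\<subseteq>H'. card X = r \<longrightarrow> c X = b)"
proof -
  obtain e where "bij_betw e {..<card H} H"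
    using H(1) ex_bij_betw_nat_finite lessThan_atLeast0 by metis
  then have e_inj: "inj_on e {..<N}" and e_into: "e ` {..<N} \<subseteq> H"
    using H(2) by (auto simp: bij_betw_def intro: inj_on_subset)
  have "(\<lambda>X. if c (e ` X) then 0 else 1) \<in> nsets {..<N} r \<rightarrow> {..<2::nat}"
    by auto
  then obtain i H0 where "i < length [m, m]" and H0: "H0 \<in> nsets {..<N} ([m, m] ! i)"
    and hom: "(\<lambda>X. if c (e ` X) then 0 else 1) ` nsets H0 r \<subseteq> {i}"
    by (rule partn_lstE[OF N]) simp
  then have "[m, m] ! i = m"
    by (auto simp: less_Suc_eq)
  then have H0_sub: "H0 \<subseteq> {..<N}" "card H0 = m" "finite H0"
    using H0 by (auto simp: nsets_def)
  have inj0: "inj_on e H0"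
    using e_inj H0_sub(1) inj_on_subset by blast
  have "c X = (i = 0)" if X: "X \<subseteq> e ` H0" "card X = r" for X
  proof -
    obtain Y where Y: "Y \<subseteq> H0" "X = e ` Y"
      using X(1) by (auto simp: subset_image_iff)
    have "card Y = r"
      using X(2) Y card_image[OF inj_on_subset[OF inj0 Y(1)]] by simp
    then have "Y \<in> nsets H0 r"
      using Y(1) finite_subset[OF Y(1) H0_sub(3)] by (simp add: nsets_def)
    then have "(if c (e ` Y) then 0 else 1) = i"
      using hom by blast
    then show ?thesis
      using Y(2) by (auto split: if_splits)
  qed
  moreover have "e ` H0 \<subseteq> H" "card (e ` H0) = m"
    using e_into H0_sub inj0 by (auto simp: card_image)
  ultimately show ?thesis
    by blast
qed

lemma ramsey_homogeneous_subset:
  "\<exists>N. \<forall>H :: 'a set. finite H \<longrightarrow> N \<le> card H \<longrightarrow> (\<forall>c :: 'a set \<Rightarrow> bool.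
     \<exists>H'\<subseteq>H. card H' = m \<and> (\<exists>b. \<forall>X\<subseteq>H'. card X = r \<longrightarrow> c X = b))"
proof -
  obtain N :: nat where N: "partn_lst {..<N} [m, m] r"
    using ramsey_full by blast
  have "\<exists>H'\<subseteq>H. card H' = m \<and> (\<exists>b. \<forall>X\<subseteq>H'. card X = r \<longrightarrow> c X = b)"
    if "finite H" "N \<le> card H" for H :: "'a set" and c :: "'a set \<Rightarrow> bool"
    using homogeneous_subset_if_partn_lst[OF N that] .
  then show ?thesis
    by blast
qed

lemma ramsey_simultaneous:
  fixes Qs :: "'q set" and ar :: "'q \<Rightarrow> nat"
  assumes "finite Qs"
  shows "\<exists>N. \<forall>H :: 'a set. finite H \<longrightarrow> N \<le> card H \<longrightarrow> (\<forall>c :: 'q \<Rightarrow> 'a set \<Rightarrow> bool.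
     \<exists>H'\<subseteq>H. card H' = m \<and> (\<forall>q\<in>Qs. \<exists>b. \<forall>X\<subseteq>H'. card X = ar q \<longrightarrow> c q X = b))"
  using assms
proof (induction Qs arbitrary: m rule: finite_induct)
  case empty
  have "\<exists>H'\<subseteq>H. card H' = m" if "m \<le> card H" for H :: "'a set"
    using obtain_subset_with_card_n[OF that] by metis
  then show ?case
    by auto
next
  case (insert q Qs)
  from insert.IH obtain N1 where N1: "\<forall>H :: 'a set. finite H \<longrightarrow> N1 \<le> card H \<longrightarrow> (\<forall>c :: 'q \<Rightarrow> 'a set \<Rightarrow> bool.
      \<exists>H'\<subseteq>H. card H' = m \<and> (\<forall>q\<in>Qs. \<exists>b. \<forall>X\<subseteq>H'. card X = ar q \<longrightarrow> c q X = b))" ..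
  from ramsey_homogeneous_subset[where m = N1 and r = "ar q"]
  obtain N where N: "\<forall>H :: 'a set. finite H \<longrightarrow> N \<le> card H \<longrightarrow> (\<forall>c :: 'a set \<Rightarrow> bool.
      \<exists>H'\<subseteq>H. card H' = N1 \<and> (\<exists>b. \<forall>X\<subseteq>H'. card X = ar q \<longrightarrow> c X = b))" ..
  have "\<exists>H'\<subseteq>H. card H' = m \<and> (\<forall>q'\<in>insert q Qs. \<exists>b. \<forall>X\<subseteq>H'. card X = ar q' \<longrightarrow> c q' X = b)"
    if H: "finite H" "N \<le> card H" for H :: "'a set" and c :: "'q \<Rightarrow> 'a set \<Rightarrow> bool"
  proof -
    obtain H1 b1 where H1: "H1 \<subseteq> H" "card H1 = N1"
      and hom1: "\<forall>X\<subseteq>H1. card X = ar q \<longrightarrow> c q X = b1"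
      using N[rule_format, OF H, of "c q"] by blast
    then have "finite H1"
      using H(1) finite_subset by blast
    with N1 H1(2) obtain H' where H': "H' \<subseteq> H1" "card H' = m"
      and hom: "\<forall>q\<in>Qs. \<exists>b. \<forall>X\<subseteq>H'. card X = ar q \<longrightarrow> c q X = b"
      by (metis order_refl)
    have "\<forall>X\<subseteq>H'. card X = ar q \<longrightarrow> c q X = b1"
      using hom1 H'(1) by blast
    then show ?thesis
      using H' H1(1) hom by (intro exI[of _ H']) auto
  qed
  then show ?case
    by blast
qed

lemma strict_sorted_nth_less_iff:
  fixes xs :: "'a :: linorder list"
  assumes "sorted_wrt (<) xs" "i < length xs" "j < length xs"
  shows "xs ! i < xs ! j \<longleftrightarrow> i < j"
  using sorted_wrt_nth_less[OF assms(1), of i j] sorted_wrt_nth_less[OF assms(1), of j i] assms(2,3)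
  by (cases i j rule: linorder_cases) auto

lemma sorted_list_of_set_nth_card_less:
  fixes X :: "'a :: linorder set"
  assumes "finite X" "x \<in> X"
  shows "sorted_list_of_set X ! card {y\<in>X. y < x} = x"
proof -
  define xs where "xs = sorted_list_of_set X"
  have sorted: "sorted_wrt (<) xs" and set_xs: "set xs = X" and "distinct xs"
    using assms xs_def by auto
  obtain p where p: "p < length xs" "xs ! p = x"
    using assms(2) set_xs in_set_conv_nth[of x xs] by auto
  have "{y\<in>X. y < x} = (!) xs ` {q. q < length xs \<and> xs ! q < xs ! p}"
    using set_xs p(2) by (auto simp: in_set_conv_nth)
  also have "{q. q < length xs \<and> xs ! q < xs ! p} = {..<p}"
    using strict_sorted_nth_less_iff[OF sorted _ p(1)] p(1) by auto
  finally have "{y\<in>X. y < x} = (!) xs ` {..<p}" .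
  moreover have "inj_on ((!) xs) {..<p}"
    using p \<open>distinct xs\<close> by (intro inj_on_nth) auto
  ultimately show ?thesis
    using p by (simp add: card_image xs_def)
qed

section \<open>Split orders\<close>

lemma split_ordersD:
  assumes "(f, r) \<in> split_orders l V"
  shows "\<forall>v\<in>V. f v \<in> {1..l}" "\<forall>v. v \<notin> V \<longrightarrow> f v = 0" "r \<subseteq> V \<times> V" "refl_on V r"
    "trans r" "antisym r" "\<forall>v\<in>V. \<forall>w\<in>V. ((v, w) \<in> r \<or> (w, v) \<in> r) \<longleftrightarrow> f v = f w"
  using assms by (auto simp: split_orders_def)

lemma pull_in_split_orders:
  assumes s: "s \<in> split_orders l V" and \<alpha>: "\<alpha> \<in> inj_tuples V n"
  shows "pull s \<alpha> \<in> split_orders l {0..<n}"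
proof -
  obtain f r where s_eq: "s = (f, r)"
    by fastforce
  note D = split_ordersD[OF s[unfolded s_eq]]
  have \<alpha>_props: "length \<alpha> = n" "distinct \<alpha>" "set \<alpha> \<subseteq> V"
    using \<alpha> by (auto simp: inj_tuples_def)
  then have in_V: "\<alpha> ! i \<in> V" if "i < n" for i
    using that by auto
  have nth_inj: "\<alpha> ! i = \<alpha> ! j \<longleftrightarrow> i = j" if "i < n" "j < n" for i j
    using \<alpha>_props that by (simp add: nth_eq_iff_index_eq)
  let ?f = "fst (pull s \<alpha>)" and ?r = "snd (pull s \<alpha>)"
  have f_eq: "?f i = (if i < n then f (\<alpha> ! i) else 0)" for i
    using \<alpha>_props(1) by (simp add: pull_def s_eq)
  have r_iff: "(i, j) \<in> ?r \<longleftrightarrow> i < n \<and> j < n \<and> (\<alpha> ! i, \<alpha> ! j) \<in> r" for i j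
    using \<alpha>_props(1) by (simp add: pull_def s_eq)
  have "\<forall>i\<in>{0..<n}. ?f i \<in> {1..l}" "\<forall>i. i \<notin> {0..<n} \<longrightarrow> ?f i = 0"
    using D(1) in_V f_eq by simp_all
  moreover have "?r \<subseteq> {0..<n} \<times> {0..<n}" "refl_on {0..<n} ?r"
    using D(4) in_V r_iff by (auto simp: refl_on_def)
  moreover have "trans ?r"
    using D(5) r_iff unfolding trans_def by blast
  moreover have "antisym ?r"
    using D(6) nth_inj r_iff unfolding antisym_def by blast
  moreover have "\<forall>i\<in>{0..<n}. \<forall>j\<in>{0..<n}. ((i, j) \<in> ?r \<or> (j, i) \<in> ?r) \<longleftrightarrow> ?f i = ?f j"
    using D(7) in_V r_iff f_eq by simp
  ultimately show ?thesis
    unfolding split_orders_def by (simp add: case_prod_beta)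
qed

lemma finite_split_orders:
  assumes "finite V"
  shows "finite (split_orders l V)"
proof -
  let ?extend = "\<lambda>(g, r). ((\<lambda>x. if x \<in> V then g x else 0), r)"
  have "split_orders l V \<subseteq> ?extend ` ((V \<rightarrow>\<^sub>E {1..l}) \<times> Pow (V \<times> V))"
  proof
    fix s assume s: "s \<in> split_orders l V"
    obtain f r where s_eq: "s = (f, r)"
      by fastforce
    note D = split_ordersD[OF s[unfolded s_eq]]
    have "s = ?extend (restrict f V, r)"
      using D(2) s_eq by (auto simp: fun_eq_iff)
    moreover have "(restrict f V, r) \<in> (V \<rightarrow>\<^sub>E {1..l}) \<times> Pow (V \<times> V)"
      using D(1,3) by auto
    ultimately show "s \<in> ?extend ` ((V \<rightarrow>\<^sub>E {1..l}) \<times> Pow (V \<times> V))"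
      by blast
  qed
  moreover have "finite (?extend ` ((V \<rightarrow>\<^sub>E {1..l}) \<times> Pow (V \<times> V)))"
    using assms by (simp add: finite_PiE)
  ultimately show ?thesis
    by (rule finite_subset)
qed

lemma finite_ramsey_patterns:
  assumes "finite L"
  shows "finite (ramsey_patterns l L k)"
proof -
  let ?extend = "\<lambda>g P. if P \<in> L then g P else {}"
  have "ramsey_patterns l L k \<subseteq> ?extend ` (\<Pi>\<^sub>E P\<in>L. Pow (split_orders l {0..<k P}))"
  proof
    fix Q assume Q: "Q \<in> ramsey_patterns l L k"
    then have "Q = ?extend (restrict Q L)"
      by (auto simp: ramsey_patterns_def fun_eq_iff)
    moreover have "restrict Q L \<in> (\<Pi>\<^sub>E P\<in>L. Pow (split_orders l {0..<k P}))"
      using Q by (auto simp: ramsey_patterns_def)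
    ultimately show "Q \<in> ?extend ` (\<Pi>\<^sub>E P\<in>L. Pow (split_orders l {0..<k P}))"
      by blast
  qed
  moreover have "finite (?extend ` (\<Pi>\<^sub>E P\<in>L. Pow (split_orders l {0..<k P})))"
    using assms by (auto intro!: finite_PiE finite_split_orders)
  ultimately show ?thesis
    by (rule finite_subset)
qed

section \<open>Patterns on a grid\<close>

text \<open>
  A split order on at most \<open>m\<close> vertices embeds into \<open>grid_order l m\<close> by sending a vertex to its colour
  and its number of strict predecessors (\<open>grid_pos\<close> below); \<open>grid_index\<close> enumerates the grid
  lexicographically.
\<close>

definition grid :: "nat \<Rightarrow> nat \<Rightarrow> (nat \<times> nat) set" where
  "grid l m = {1..l} \<times> {..<m}"

definition grid_order :: "nat \<Rightarrow> nat \<Rightarrow> ((nat \<times> nat) \<Rightarrow> nat) \<times> ((nat \<times> nat) \<times> (nat \<times> nat)) set" where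
  "grid_order l m = ((\<lambda>p. if p \<in> grid l m then fst p else 0),
     {(p, q). p \<in> grid l m \<and> q \<in> grid l m \<and> fst p = fst q \<and> snd p \<le> snd q})"

lemma grid_order_in_split_orders: "grid_order l m \<in> split_orders l (grid l m)"
  by (auto simp: split_orders_def grid_order_def grid_def refl_on_def trans_def antisym_def)

definition grid_index :: "nat \<Rightarrow> nat \<times> nat \<Rightarrow> nat" where
  "grid_index m p = (fst p - 1) * m + snd p"

lemma mult_add_less_mult_add:
  fixes a b s t m :: nat
  assumes "a < b" "s < m"
  shows "a * m + s < b * m + t"
proof -
  have "a * m + s < Suc a * m"
    using assms(2) by simp
  also have "\<dots> \<le> b * m"
    using assms(1) by (intro mult_le_mono1) simp
  finally show ?thesis
    by simp
qed

lemma mult_add_less_iff: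
  fixes a b s t m :: nat
  assumes "s < m" "t < m"
  shows "a * m + s < b * m + t \<longleftrightarrow> a < b \<or> a = b \<and> s < t"
  using mult_add_less_mult_add[of a b s m t] mult_add_less_mult_add[of b a t m s] assms
  by (cases a b rule: linorder_cases) auto

lemma grid_index_less_iff:
  assumes "p \<in> grid l m" "q \<in> grid l m"
  shows "grid_index m p < grid_index m q \<longleftrightarrow> fst p < fst q \<or> fst p = fst q \<and> snd p < snd q"
  using assms mult_add_less_iff[of "snd p" m "snd q" "fst p - 1" "fst q - 1"]
  by (auto simp: grid_index_def grid_def)

lemma grid_index_less:
  assumes "p \<in> grid l m"
  shows "grid_index m p < l * m"
proof -
  have "grid_index m p < (fst p - 1) * m + m"
    using assms by (auto simp: grid_index_def grid_def)
  also have "\<dots> = fst p * m"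
    using assms by (cases "fst p") (auto simp: grid_def)
  also have "\<dots> \<le> l * m"
    using assms by (auto simp: grid_def)
  finally show ?thesis .
qed

lemma inj_on_grid_index: "inj_on (grid_index m) (grid l m)"
proof (rule inj_onI)
  fix p q assume "p \<in> grid l m" "q \<in> grid l m" "grid_index m p = grid_index m q"
  then show "p = q"
    using grid_index_less_iff[of p l m q] grid_index_less_iff[of q l m p]
    by (auto simp: prod_eq_iff)
qed

lemma card_set_filter_eq_card_indices:
  assumes "distinct xs"
  shows "card {x\<in>set xs. P x} = card {i. i < length xs \<and> P (xs ! i)}"
proof -
  have "{x\<in>set xs. P x} = (!) xs ` {i. i < length xs \<and> P (xs ! i)}"
    by (auto simp: in_set_conv_nth)
  moreover have "inj_on ((!) xs) {i. i < length xs \<and> P (xs ! i)}"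
    using assms by (intro inj_on_nth) auto
  ultimately show ?thesis
    by (simp add: card_image)
qed

text \<open>
  The code of a tuple of grid points keeps colours and lexicographic ranks but forgets positions:
  it is determined by the pattern of the tuple, and together with the image of the tuple under an
  order-preserving map it recovers that image.  Ramsey's theorem is applied to one colouring per code.
\<close>

definition grid_code :: "nat \<Rightarrow> (nat \<times> nat) list \<Rightarrow> (nat \<times> nat) list" where
  "grid_code m ps = map (\<lambda>p. (fst p, card {q\<in>set ps. grid_index m q < grid_index m p})) ps"

definition lex_before :: "(nat \<Rightarrow> nat) \<times> (nat \<times> nat) set \<Rightarrow> nat \<Rightarrow> nat \<Rightarrow> bool" where
  "lex_before \<sigma> j i \<longleftrightarrow> fst \<sigma> j < fst \<sigma> i \<or> fst \<sigma> j = fst \<sigma> i \<and> (j, i) \<in> snd \<sigma> \<and> (i, j) \<notin> snd \<sigma>"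

lemma lex_before_pull_grid_order_iff:
  assumes "ps \<in> inj_tuples (grid l m) n" "i < n" "j < n"
  shows "lex_before (pull (grid_order l m) ps) j i \<longleftrightarrow> grid_index m (ps ! j) < grid_index m (ps ! i)"
proof -
  have in_grid: "ps ! i \<in> grid l m" "ps ! j \<in> grid l m" and len: "length ps = n"
    using assms by (auto simp: inj_tuples_def)
  have colour: "fst (pull (grid_order l m) ps) i = fst (ps ! i)" "fst (pull (grid_order l m) ps) j = fst (ps ! j)"
    using assms(2,3) in_grid len by (simp_all add: pull_def grid_order_def)
  have order: "(j, i) \<in> snd (pull (grid_order l m) ps)
      \<longleftrightarrow> fst (ps ! j) = fst (ps ! i) \<and> snd (ps ! j) \<le> snd (ps ! i)"
    "(i, j) \<in> snd (pull (grid_order l m) ps)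
      \<longleftrightarrow> fst (ps ! i) = fst (ps ! j) \<and> snd (ps ! i) \<le> snd (ps ! j)"
    using assms(2,3) in_grid len by (simp_all add: pull_def grid_order_def)
  show ?thesis
    unfolding lex_before_def colour order grid_index_less_iff[OF in_grid(2,1)]
    by arith
qed

lemma grid_code_eq_pull:
  assumes ps: "ps \<in> inj_tuples (grid l m) n"
  shows "grid_code m ps = map (\<lambda>i. (fst (pull (grid_order l m) ps) i,
      card {j. j < n \<and> lex_before (pull (grid_order l m) ps) j i})) [0..<n]"
proof -
  have ps_props: "length ps = n" "distinct ps" "set ps \<subseteq> grid l m"
    using ps by (auto simp: inj_tuples_def)
  have "{j. j < n \<and> lex_before (pull (grid_order l m) ps) j i}
      = {j. j < n \<and> grid_index m (ps ! j) < grid_index m (ps ! i)}" if "i < n" for i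
    using lex_before_pull_grid_order_iff[OF ps that] by blast
  moreover have "card {q\<in>set ps. grid_index m q < grid_index m (ps ! i)}
      = card {j. j < n \<and> grid_index m (ps ! j) < grid_index m (ps ! i)}" for i
    using card_set_filter_eq_card_indices[OF ps_props(2)] ps_props(1) by simp
  moreover have "fst (pull (grid_order l m) ps) i = fst (ps ! i)" if "i < n" for i
    using ps_props that nth_mem by (fastforce simp: pull_def grid_order_def)
  ultimately have "grid_code m ps ! i = (fst (pull (grid_order l m) ps) i,
      card {j. j < n \<and> lex_before (pull (grid_order l m) ps) j i})" if "i < n" for i
    using that ps_props(1) by (simp add: grid_code_def)
  then show ?thesis
    using ps_props(1) by (intro nth_equalityI) (simp_all add: grid_code_def)
qed

lemma set_grid_code_subset:
  assumes "ps \<in> inj_tuples (grid l m) n"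
  shows "set (grid_code m ps) \<subseteq> {1..l} \<times> {..<n}"
proof -
  have "card {q\<in>set ps. grid_index m q < grid_index m p} < n" if "p \<in> set ps" for p
  proof -
    have "card {q\<in>set ps. grid_index m q < grid_index m p} < card (set ps)"
      using that by (intro psubset_card_mono) auto
    then show ?thesis
      using assms distinct_card by (fastforce simp: inj_tuples_def)
  qed
  then show ?thesis
    using assms by (auto simp: grid_code_def inj_tuples_def grid_def)
qed

lemma inj_on_grid_if_less_iff:
  fixes e :: "nat \<times> nat \<Rightarrow> 'b :: linorder"
  assumes e_less_iff: "\<And>p q. p \<in> grid l m \<Longrightarrow> q \<in> grid l m \<Longrightarrow> e p < e q \<longleftrightarrow> grid_index m p < grid_index m q"
  shows "inj_on e (grid l m)"
proof (rule inj_onI)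
  fix p q assume pq: "p \<in> grid l m" "q \<in> grid l m" "e p = e q"
  then have "grid_index m p = grid_index m q"
    using e_less_iff[of p q] e_less_iff[of q p] by auto
  then show "p = q"
    using inj_on_grid_index[of m l] pq(1,2) by (auto dest: inj_onD)
qed

lemma map_grid_code_decode:
  fixes e :: "nat \<times> nat \<Rightarrow> 'b :: linorder"
  assumes ps: "ps \<in> inj_tuples (grid l m) n"
    and e_less_iff: "\<And>p q. p \<in> grid l m \<Longrightarrow> q \<in> grid l m \<Longrightarrow> e p < e q \<longleftrightarrow> grid_index m p < grid_index m q"
  shows "map (\<lambda>(j, i). a (j, sorted_list_of_set (e ` set ps) ! i)) (grid_code m ps)
    = map (\<lambda>p. a (fst p, e p)) ps"
proof -
  have ps_grid: "set ps \<subseteq> grid l m"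
    using ps by (simp add: inj_tuples_def)
  have "inj_on e (set ps)"
    using inj_on_grid_if_less_iff[OF e_less_iff] ps_grid by (rule inj_on_subset)
  then have "card {q\<in>set ps. grid_index m q < grid_index m p} = card {y\<in>e ` set ps. y < e p}"
    if "p \<in> set ps" for p
  proof -
    have "e q < e p \<longleftrightarrow> grid_index m q < grid_index m p" if "q \<in> set ps" for q
      using e_less_iff ps_grid that \<open>p \<in> set ps\<close> by blast
    then have "{y\<in>e ` set ps. y < e p} = e ` {q\<in>set ps. grid_index m q < grid_index m p}"
      by blast
    then show ?thesis
      using \<open>inj_on e (set ps)\<close> by (simp add: card_image inj_on_subset)
  qed
  then show ?thesis
    unfolding grid_code_def by (simp add: sorted_list_of_set_nth_card_less)
qed

definition pattern_invariant :: "'p set \<Rightarrow> ('p \<Rightarrow> nat) \<Rightarrow> nat \<Rightarrow> nat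
     \<Rightarrow> (nat \<times> nat \<Rightarrow> 'w) \<Rightarrow> ('p \<Rightarrow> 'w list set) \<Rightarrow> bool" where
  "pattern_invariant L k l m h R \<longleftrightarrow> (\<forall>P\<in>L. \<forall>ps\<in>inj_tuples (grid l m) (k P). \<forall>qs\<in>inj_tuples (grid l m) (k P).
     pull (grid_order l m) ps = pull (grid_order l m) qs \<longrightarrow> (map h ps \<in> R P \<longleftrightarrow> map h qs \<in> R P))"

lemma pattern_invariant_if_homogeneous:
  fixes e :: "nat \<times> nat \<Rightarrow> 'b :: linorder"
  assumes e_less_iff: "\<And>p q. p \<in> grid l m \<Longrightarrow> q \<in> grid l m \<Longrightarrow> e p < e q \<longleftrightarrow> grid_index m p < grid_index m q"
    and e_into: "e ` grid l m \<subseteq> H"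
    and hom: "\<And>P cs. P \<in> L \<Longrightarrow> length cs = k P \<Longrightarrow> set cs \<subseteq> {1..l} \<times> {..<k P} \<Longrightarrow>
      \<exists>b. \<forall>X\<subseteq>H. card X = k P \<longrightarrow> (map (\<lambda>(j, i). a (j, sorted_list_of_set X ! i)) cs \<in> R P) = b"
  shows "pattern_invariant L k l m (\<lambda>p. a (fst p, e p)) R"
  unfolding pattern_invariant_def
proof (intro ballI impI)
  fix P ps qs
  assume P: "P \<in> L" and ps: "ps \<in> inj_tuples (grid l m) (k P)" and qs: "qs \<in> inj_tuples (grid l m) (k P)"
    and pull_eq: "pull (grid_order l m) ps = pull (grid_order l m) qs"
  let ?c = "\<lambda>X. map (\<lambda>(j, i). a (j, sorted_list_of_set X ! i)) (grid_code m ps) \<in> R P"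
  have "grid_code m qs = grid_code m ps"
    using grid_code_eq_pull[OF ps] grid_code_eq_pull[OF qs] pull_eq by simp
  then have decode: "map (\<lambda>p. a (fst p, e p)) ps \<in> R P \<longleftrightarrow> ?c (e ` set ps)"
    "map (\<lambda>p. a (fst p, e p)) qs \<in> R P \<longleftrightarrow> ?c (e ` set qs)"
    using map_grid_code_decode[OF ps e_less_iff, where a = a]
      map_grid_code_decode[OF qs e_less_iff, where a = a] by simp_all
  have image: "e ` set xs \<subseteq> H \<and> card (e ` set xs) = k P" if "xs \<in> inj_tuples (grid l m) (k P)" for xs
  proof -
    have xs: "length xs = k P" "distinct xs" "set xs \<subseteq> grid l m"
      using that by (simp_all add: inj_tuples_def)
    then have "card (e ` set xs) = k P"
      using inj_on_subset[OF inj_on_grid_if_less_iff[OF e_less_iff] xs(3)]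
      by (simp add: card_image distinct_card)
    moreover have "e ` set xs \<subseteq> H"
      using e_into xs(3) by (meson image_mono order_trans)
    ultimately show ?thesis
      by blast
  qed
  have code: "length (grid_code m ps) = k P" "set (grid_code m ps) \<subseteq> {1..l} \<times> {..<k P}"
    using ps set_grid_code_subset[OF ps] by (simp_all add: grid_code_def inj_tuples_def)
  from hom[OF P code] obtain b where b: "\<forall>X\<subseteq>H. card X = k P \<longrightarrow> ?c X = b" ..
  have b_on: "?c X = b" if "X \<subseteq> H \<and> card X = k P" for X
    using b[rule_format, OF conjunct1[OF that] conjunct2[OF that]] .
  show "map (\<lambda>p. a (fst p, e p)) ps \<in> R P \<longleftrightarrow> map (\<lambda>p. a (fst p, e p)) qs \<in> R P"
    unfolding decode b_on[OF image[OF ps]] b_on[OF image[OF qs]] ..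
qed

definition grid_enum :: "'a :: linorder set \<Rightarrow> nat \<Rightarrow> nat \<times> nat \<Rightarrow> 'a" where
  "grid_enum H m p = sorted_list_of_set H ! grid_index m p"

lemma
  assumes "finite H" "card H = l * m"
  shows grid_enum_mem: "p \<in> grid l m \<Longrightarrow> grid_enum H m p \<in> H"
    and grid_enum_less_iff: "p \<in> grid l m \<Longrightarrow> q \<in> grid l m \<Longrightarrow>
      grid_enum H m p < grid_enum H m q \<longleftrightarrow> grid_index m p < grid_index m q"
proof -
  have len: "length (sorted_list_of_set H) = l * m"
    using assms by simp
  show "grid_enum H m p \<in> H" if "p \<in> grid l m"
    using nth_mem[of "grid_index m p" "sorted_list_of_set H"] grid_index_less[OF that] len assms(1)
    by (simp add: grid_enum_def)
  show "grid_enum H m p < grid_enum H m q \<longleftrightarrow> grid_index m p < grid_index m q"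
    if "p \<in> grid l m" "q \<in> grid l m"
    using grid_index_less[OF that(1)] grid_index_less[OF that(2)] len assms(1)
    unfolding grid_enum_def by (simp add: strict_sorted_nth_less_iff)
qed

lemma grid_ramsey:
  fixes L :: "'p set" and k :: "'p \<Rightarrow> nat"
  assumes "finite L"
  shows "\<exists>M. \<forall>(a :: nat \<times> nat \<Rightarrow> 'w) R. \<exists>e. inj_on e (grid l m) \<and> e ` grid l m \<subseteq> {..<M}
     \<and> pattern_invariant L k l m (\<lambda>p. a (fst p, e p)) R"
proof -
  define I where "I = (SIGMA P:L. {cs. set cs \<subseteq> {1..l} \<times> {..<k P} \<and> length cs = k P})"
  have "finite I"
    using assms unfolding I_def by (intro finite_SigmaI finite_lists_length_eq) auto
  from ramsey_simultaneous[OF this, where m = "l * m" and ar = "\<lambda>q. k (fst q)"]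
  obtain N where N: "\<forall>H :: nat set. finite H \<longrightarrow> N \<le> card H \<longrightarrow>
      (\<forall>c :: 'p \<times> (nat \<times> nat) list \<Rightarrow> nat set \<Rightarrow> bool. \<exists>H'\<subseteq>H. card H' = l * m
        \<and> (\<forall>q\<in>I. \<exists>b. \<forall>X\<subseteq>H'. card X = k (fst q) \<longrightarrow> c q X = b))" ..
  have "\<exists>e. inj_on e (grid l m) \<and> e ` grid l m \<subseteq> {..<N} \<and> pattern_invariant L k l m (\<lambda>p. a (fst p, e p)) R"
    for a :: "nat \<times> nat \<Rightarrow> 'w" and R
  proof -
    obtain H where H: "H \<subseteq> {..<N}" "card H = l * m"
      and hom: "\<forall>(P, cs)\<in>I. \<exists>b. \<forall>X\<subseteq>H. card X = k P \<longrightarrow>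
        (map (\<lambda>(j, i). a (j, sorted_list_of_set X ! i)) cs \<in> R P) = b"
      using N[rule_format, of "{..<N}" "\<lambda>(P, cs) X. map (\<lambda>(j, i). a (j, sorted_list_of_set X ! i)) cs \<in> R P"]
      by (auto simp: case_prod_beta)
    have "finite H"
      using H(1) finite_subset by blast
    note enum = grid_enum_mem[OF this H(2)] grid_enum_less_iff[OF this H(2)]
    have "pattern_invariant L k l m (\<lambda>p. a (fst p, grid_enum H m p)) R"
    proof (rule pattern_invariant_if_homogeneous[OF enum(2)])
      show "grid_enum H m ` grid l m \<subseteq> H"
        using enum(1) by blast
      fix P cs assume "P \<in> L" "length cs = k P" "set cs \<subseteq> {1..l} \<times> {..<k P}"
      then have "(P, cs) \<in> I"
        by (simp add: I_def)
      then show "\<exists>b. \<forall>X\<subseteq>H. card X = k P \<longrightarrow> (map (\<lambda>(j, i). a (j, sorted_list_of_set X ! i)) cs \<in> R P) = b"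
        using bspec[OF hom] by fastforce
    qed
    moreover have "grid_enum H m ` grid l m \<subseteq> {..<N}"
      using enum(1) H(1) by auto
    ultimately show ?thesis
      using inj_on_grid_if_less_iff[OF enum(2)] by blast
  qed
  then show ?thesis
    by blast
qed

section \<open>Transfer to uniform structures\<close>

definition grid_pos :: "('a \<Rightarrow> nat) \<times> ('a \<times> 'a) set \<Rightarrow> 'a \<Rightarrow> nat \<times> nat" where
  "grid_pos s x = (fst s x, card {z. (z, x) \<in> snd s \<and> z \<noteq> x})"

lemma split_order_rank_less:
  assumes s: "(f, r) \<in> split_orders l V" and "finite V"
    and xy: "(x, y) \<in> r" "x \<noteq> y"
  shows "snd (grid_pos (f, r) x) < snd (grid_pos (f, r) y)"
proof -
  note D = split_ordersD[OF s]
  have "{z. (z, x) \<in> r \<and> z \<noteq> x} \<subset> {z. (z, y) \<in> r \<and> z \<noteq> y}"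
  proof
    show "{z. (z, x) \<in> r \<and> z \<noteq> x} \<subseteq> {z. (z, y) \<in> r \<and> z \<noteq> y}"
      using D(5,6) xy by (auto dest: transD antisymD)
    show "{z. (z, x) \<in> r \<and> z \<noteq> x} \<noteq> {z. (z, y) \<in> r \<and> z \<noteq> y}"
      using xy by blast
  qed
  moreover have "finite {z. (z, y) \<in> r \<and> z \<noteq> y}"
    using D(3) \<open>finite V\<close> by (auto intro: finite_subset)
  ultimately show ?thesis
    by (simp add: grid_pos_def psubset_card_mono)
qed

lemma split_order_mem_iff:
  assumes s: "(f, r) \<in> split_orders l V" and "finite V" and "x \<in> V" "y \<in> V"
  shows "(x, y) \<in> r \<longleftrightarrow> f x = f y \<and> snd (grid_pos (f, r) x) \<le> snd (grid_pos (f, r) y)"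
proof
  note D = split_ordersD[OF s]
  assume "(x, y) \<in> r"
  then show "f x = f y \<and> snd (grid_pos (f, r) x) \<le> snd (grid_pos (f, r) y)"
    using D(7) split_order_rank_less[OF s \<open>finite V\<close>] assms(3,4)
    by (cases "x = y") (auto intro: less_imp_le)
next
  note D = split_ordersD[OF s]
  assume le: "f x = f y \<and> snd (grid_pos (f, r) x) \<le> snd (grid_pos (f, r) y)"
  then have "(x, y) \<in> r \<or> (y, x) \<in> r"
    using D(7) assms(3,4) by blast
  moreover have "(y, x) \<in> r \<Longrightarrow> x \<noteq> y \<Longrightarrow> False"
    using split_order_rank_less[OF s \<open>finite V\<close>, of y x] le by simp
  ultimately show "(x, y) \<in> r"
    using D(4) assms(3) by (auto simp: refl_on_def)
qed

lemma grid_pos_in_grid: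
  assumes s: "s \<in> split_orders l V" and "finite V" "card V \<le> m" and "x \<in> V"
  shows "grid_pos s x \<in> grid l m"
proof -
  obtain f r where s_eq: "s = (f, r)"
    by fastforce
  note D = split_ordersD[OF s[unfolded s_eq]]
  have "{z. (z, x) \<in> r \<and> z \<noteq> x} \<subseteq> V - {x}"
    using D(3) by auto
  then have "card {z. (z, x) \<in> r \<and> z \<noteq> x} < card V"
    using \<open>finite V\<close> \<open>x \<in> V\<close> by (meson card_Diff1_less card_mono finite_Diff le_less_trans)
  then show ?thesis
    using D(1) assms(3,4) by (auto simp: grid_pos_def grid_def s_eq)
qed

lemma inj_on_grid_pos:
  assumes s: "s \<in> split_orders l V" and "finite V"
  shows "inj_on (grid_pos s) V"
proof (rule inj_onI)
  obtain f r where s_eq: "s = (f, r)"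
    by fastforce
  fix x y assume "x \<in> V" "y \<in> V" "grid_pos s x = grid_pos s y"
  then have "(x, y) \<in> r" "(y, x) \<in> r"
    using split_order_mem_iff[OF s[unfolded s_eq] \<open>finite V\<close>] s_eq by (auto simp: grid_pos_def)
  then show "x = y"
    using split_ordersD(6)[OF s[unfolded s_eq]] by (auto dest: antisymD)
qed

lemma pull_grid_pos:
  assumes s: "s \<in> split_orders l V" and "finite V" "card V \<le> m" and \<beta>: "\<beta> \<in> inj_tuples V n"
  shows "pull (grid_order l m) (map (grid_pos s) \<beta>) = pull s \<beta>"
proof -
  obtain f r where s_eq: "s = (f, r)"
    by fastforce
  have in_V: "\<beta> ! i \<in> V" if "i < length \<beta>" for i
    using \<beta> that by (auto simp: inj_tuples_def)
  then have in_grid: "grid_pos s (\<beta> ! i) \<in> grid l m" if "i < length \<beta>" for i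
    using grid_pos_in_grid[OF s assms(2,3)] that by blast
  have order_iff: "(\<beta> ! i, \<beta> ! j) \<in> r \<longleftrightarrow> grid_pos s (\<beta> ! i) \<in> grid l m \<and> grid_pos s (\<beta> ! j) \<in> grid l m
      \<and> fst (grid_pos s (\<beta> ! i)) = fst (grid_pos s (\<beta> ! j))
      \<and> snd (grid_pos s (\<beta> ! i)) \<le> snd (grid_pos s (\<beta> ! j))" if "i < length \<beta>" "j < length \<beta>" for i j
    using split_order_mem_iff[OF s[unfolded s_eq] \<open>finite V\<close> in_V[OF that(1)] in_V[OF that(2)]]
      in_grid[OF that(1)] in_grid[OF that(2)] s_eq by (simp add: grid_pos_def)
  have "fst (pull (grid_order l m) (map (grid_pos s) \<beta>)) = fst (pull s \<beta>)"
    using in_grid s_eq by (auto simp: pull_def grid_order_def grid_pos_def)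
  moreover have "snd (pull (grid_order l m) (map (grid_pos s) \<beta>)) = snd (pull s \<beta>)"
    using order_iff s_eq by (auto simp: pull_def grid_order_def)
  ultimately show ?thesis
    by (simp add: prod_eq_iff)
qed

definition grid_pattern :: "'p set \<Rightarrow> ('p \<Rightarrow> nat) \<Rightarrow> nat \<Rightarrow> nat \<Rightarrow> (nat \<times> nat \<Rightarrow> 'w)
     \<Rightarrow> ('p \<Rightarrow> 'w list set) \<Rightarrow> 'p \<Rightarrow> ((nat \<Rightarrow> nat) \<times> (nat \<times> nat) set) set" where
  "grid_pattern L k l m h R P = (if P \<in> L then
     {pull (grid_order l m) ps | ps. ps \<in> inj_tuples (grid l m) (k P) \<and> map h ps \<in> R P} else {})"

lemma grid_pattern_in_ramsey_patterns: "grid_pattern L k l m h R \<in> ramsey_patterns l L k"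
  using pull_in_split_orders[OF grid_order_in_split_orders]
  by (auto simp: ramsey_patterns_def grid_pattern_def)

lemma rels_iff_uniform_grid_pattern:
  assumes inv: "pattern_invariant L k l m h R"
    and s: "s \<in> split_orders l (verts K)" and "finite (verts K)" "card (verts K) \<le> m"
    and unif: "uniform L k K (grid_pattern L k l m h R) s"
    and P: "P \<in> L" and \<beta>: "\<beta> \<in> inj_tuples (verts K) (k P)"
  shows "\<beta> \<in> rels K P \<longleftrightarrow> map (h \<circ> grid_pos s) \<beta> \<in> R P"
proof -
  let ?ps = "map (grid_pos s) \<beta>"
  have ps: "?ps \<in> inj_tuples (grid l m) (k P)"
    using \<beta> grid_pos_in_grid[OF s assms(3,4)] inj_on_subset[OF inj_on_grid_pos[OF s assms(3)]]
    by (auto simp: inj_tuples_def distinct_map)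
  have "\<beta> \<in> rels K P \<longleftrightarrow> pull (grid_order l m) ?ps \<in> grid_pattern L k l m h R P"
    using unif P \<beta> pull_grid_pos[OF s assms(3,4) \<beta>] by (simp add: uniform_def)
  also have "\<dots> \<longleftrightarrow> map h ?ps \<in> R P"
    using inv P ps unfolding grid_pattern_def pattern_invariant_def by auto
  finally show ?thesis
    by simp
qed

definition uniform_copy :: "'p set \<Rightarrow> ('p \<Rightarrow> nat) \<Rightarrow> nat \<Rightarrow> ('v, 'p) gstr set
     \<Rightarrow> (('v, 'p) gstr \<Rightarrow> ('v \<Rightarrow> nat) \<times> ('v \<times> 'v) set \<Rightarrow> bool) \<Rightarrow> nat
     \<Rightarrow> (nat \<times> nat \<Rightarrow> 'w) \<Rightarrow> ('p \<Rightarrow> 'w list set) \<Rightarrow> bool" where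
  "uniform_copy L k l Fam C M a R \<longleftrightarrow> (\<exists>F\<in>Fam. \<exists>s\<in>split_orders l (verts F). C F s \<and>
     (\<exists>t. inj_on t (verts F) \<and> t ` verts F \<subseteq> {..<M} \<and>
        (\<forall>P\<in>L. \<forall>\<beta>\<in>inj_tuples (verts F) (k P). \<beta> \<in> rels F P \<longleftrightarrow> map (\<lambda>x. a (fst s x, t x)) \<beta> \<in> R P)))"

lemma uniform_copy_if_pattern_invariant:
  assumes cover: "\<forall>Q\<in>ramsey_patterns l L k. \<exists>F\<in>Fam. card (verts F) \<le> m \<and> finite (verts F)
      \<and> (\<exists>s\<in>split_orders l (verts F). uniform L k (J F) Q s \<and> C F s)"
    and e: "inj_on e (grid l m)" "e ` grid l m \<subseteq> {..<M}"
    and inv: "pattern_invariant L k l m (\<lambda>p. a (fst p, e p)) R"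
  shows "uniform_copy L k l Fam C M a R"
proof -
  define Q where "Q = grid_pattern L k l m (\<lambda>p. a (fst p, e p)) R"
  have "Q \<in> ramsey_patterns l L k"
    by (simp add: Q_def grid_pattern_in_ramsey_patterns)
  then obtain F s where F: "F \<in> Fam" "finite (verts F)" "card (verts F) \<le> m"
    and s: "s \<in> split_orders l (verts F)" "uniform L k (J F) Q s" "C F s"
    using cover by blast
  define t where "t = e \<circ> grid_pos s"
  have "inj_on t (verts F)"
    unfolding t_def using inj_on_grid_pos[OF s(1) F(2)] grid_pos_in_grid[OF s(1) F(2,3)]
    by (auto intro!: comp_inj_on inj_on_subset[OF e(1)])
  moreover have "t ` verts F \<subseteq> {..<M}"
    unfolding t_def using grid_pos_in_grid[OF s(1) F(2,3)] e(2) by auto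
  moreover have "\<beta> \<in> rels F P \<longleftrightarrow> map (\<lambda>x. a (fst s x, t x)) \<beta> \<in> R P"
    if "P \<in> L" "\<beta> \<in> inj_tuples (verts F) (k P)" for P \<beta>
    using rels_iff_uniform_grid_pattern[OF inv, of s "J F"] s F that
    by (simp add: J_def Q_def t_def grid_pos_def comp_def)
  ultimately show ?thesis
    unfolding uniform_copy_def using F(1) s(1,3) by blast
qed

lemma bounded_witnesses:
  fixes f :: "'b \<Rightarrow> nat"
  assumes "finite A" and "\<forall>x\<in>A. \<exists>y\<in>B. P x y"
  shows "\<exists>m. \<forall>x\<in>A. \<exists>y\<in>B. f y \<le> m \<and> P x y"
proof -
  obtain g where g: "\<forall>x\<in>A. g x \<in> B \<and> P x (g x)"
    using bchoice[of A "\<lambda>x y. y \<in> B \<and> P x y"] assms(2) by blast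
  have "f (g x) \<le> (\<Sum>x\<in>A. f (g x))" if "x \<in> A" for x
    by (rule member_le_sum) (simp_all add: that assms(1))
  then show ?thesis
    using g by blast
qed

lemma ramsey_uniform_copy:
  fixes L :: "'p set" and Fam :: "('v, 'p) gstr set"
  assumes "finite L" and finite_verts: "\<forall>F\<in>Fam. finite (verts F)"
    and cover: "\<forall>Q\<in>ramsey_patterns l L k. \<exists>F\<in>Fam. \<exists>s\<in>split_orders l (verts F).
      uniform L k (J F) Q s \<and> C F s"
  shows "\<exists>M. \<forall>(a :: nat \<times> nat \<Rightarrow> 'w) R. uniform_copy L k l Fam C M a R"
proof -
  have "\<forall>Q\<in>ramsey_patterns l L k. \<exists>F\<in>Fam. finite (verts F)
      \<and> (\<exists>s\<in>split_orders l (verts F). uniform L k (J F) Q s \<and> C F s)"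
    using cover finite_verts by blast
  from bounded_witnesses[OF finite_ramsey_patterns[OF \<open>finite L\<close>] this, where f = "\<lambda>F. card (verts F)"]
  obtain m where m: "\<forall>Q\<in>ramsey_patterns l L k. \<exists>F\<in>Fam. card (verts F) \<le> m \<and> finite (verts F)
      \<and> (\<exists>s\<in>split_orders l (verts F). uniform L k (J F) Q s \<and> C F s)" ..
  from grid_ramsey[OF \<open>finite L\<close>]
  obtain M where M: "\<forall>(a :: nat \<times> nat \<Rightarrow> 'w) R. \<exists>e. inj_on e (grid l m) \<and> e ` grid l m \<subseteq> {..<M}
      \<and> pattern_invariant L k l m (\<lambda>p. a (fst p, e p)) R" ..
  have "uniform_copy L k l Fam C M a R" for a :: "nat \<times> nat \<Rightarrow> 'w" and R
  proof -
    obtain e where "inj_on e (grid l m)" "e ` grid l m \<subseteq> {..<M}"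
      and "pattern_invariant L k l m (\<lambda>p. a (fst p, e p)) R"
      using M by blast
    then show ?thesis
      by (rule uniform_copy_if_pattern_invariant[OF m])
  qed
  then show ?thesis
    by blast
qed

section \<open>Forbidden induced substructures\<close>

definition edge_pullback :: "('w, 'p) gstr \<Rightarrow> ('v \<Rightarrow> 'w) \<Rightarrow> ('v, 'p) gstr \<Rightarrow> ('v, 'p) gstr" where
  "edge_pullback N h F =
     F\<lparr>edges := {(x, y). x \<in> verts F \<and> y \<in> verts F \<and> (h x, h y) \<in> edges N}\<rparr>"

lemma edge_pullback_in_up_E:
  assumes N: "is_model L k N" and F: "is_model L k F" "F \<in> Fam"
    and edges: "\<forall>(x, y)\<in>edges F. (h x, h y) \<in> edges N"
  shows "edge_pullback N h F \<in> up_E L k Fam"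
proof -
  have "is_model L k (edge_pullback N h F)"
    using N F(1) by (auto simp: is_model_def edge_pullback_def sym_def irrefl_def)
  moreover have "edges F \<subseteq> edges (edge_pullback N h F)"
    using F(1) edges by (auto simp: is_model_def edge_pullback_def)
  ultimately show ?thesis
    using F(2) by (auto simp: up_E_def edge_pullback_def)
qed

lemma rels_eq_map_inv_into:
  assumes N: "is_model L k N" and F: "is_model L k F" and h: "inj_on h (verts F)"
    and rels: "\<forall>P\<in>L. \<forall>\<beta>\<in>inj_tuples (verts F) (k P). \<beta> \<in> rels F P \<longleftrightarrow> map h \<beta> \<in> rels N P"
    and P: "P \<in> L"
  shows "rels F P = map (inv_into (verts F) h) ` {\<alpha>\<in>rels N P. set \<alpha> \<subseteq> h ` verts F}"
proof (intro equalityI subsetI)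
  let ?g = "inv_into (verts F) h"
  fix \<beta> assume \<beta>: "\<beta> \<in> rels F P"
  then have \<beta>_inj: "\<beta> \<in> inj_tuples (verts F) (k P)"
    using F P by (auto simp: is_model_def)
  then have "map ?g (map h \<beta>) = \<beta>"
    unfolding map_map using h by (intro map_idI) (auto simp: inj_tuples_def)
  moreover have "map h \<beta> \<in> rels N P" "set (map h \<beta>) \<subseteq> h ` verts F"
    using rels P \<beta> \<beta>_inj by (auto simp: inj_tuples_def)
  ultimately show "\<beta> \<in> map ?g ` {\<alpha>\<in>rels N P. set \<alpha> \<subseteq> h ` verts F}"
    by (metis (mono_tags, lifting) image_eqI mem_Collect_eq)
next
  let ?g = "inv_into (verts F) h"
  fix \<beta> assume "\<beta> \<in> map ?g ` {\<alpha>\<in>rels N P. set \<alpha> \<subseteq> h ` verts F}"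
  then obtain \<alpha> where \<alpha>: "\<alpha> \<in> rels N P" "set \<alpha> \<subseteq> h ` verts F" "\<beta> = map ?g \<alpha>"
    by blast
  then have "\<alpha> \<in> inj_tuples (verts N) (k P)"
    using N P by (auto simp: is_model_def)
  moreover have "bij_betw ?g (h ` verts F) (verts F)"
    using h by (simp add: bij_betw_inv_into bij_betw_imageI)
  ultimately have "\<beta> \<in> inj_tuples (verts F) (k P)" and "map h \<beta> = \<alpha>"
    using \<alpha> by (auto simp: inj_tuples_def distinct_map bij_betw_def subset_iff f_inv_into_f map_idI
        intro: inj_on_subset)
  then show "\<beta> \<in> rels F P"
    using rels P \<alpha>(1) by simp
qed

lemma iso_induced_edge_pullback:
  assumes N: "is_model L k N" and F: "is_model L k F"
    and h: "inj_on h (verts F)" "h ` verts F \<subseteq> verts N"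
    and rels: "\<forall>P\<in>L. \<forall>\<beta>\<in>inj_tuples (verts F) (k P). \<beta> \<in> rels F P \<longleftrightarrow> map h \<beta> \<in> rels N P"
  shows "iso (induced N (h ` verts F)) (edge_pullback N h F)"
proof -
  define V where "V = verts F"
  define g where "g = inv_into V h"
  have gh: "g (h x) = x" if "x \<in> V" for x
    using h(1) that by (simp add: g_def V_def)
  have hg: "h (g u) = u" and g_in: "g u \<in> V" if "u \<in> h ` V" for u
    using that by (simp_all add: g_def f_inv_into_f inv_into_into)
  have "edges (edge_pullback N h F) = (\<lambda>(u, v). (g u, g v)) ` edges (induced N (h ` V))"
  proof (intro equalityI subsetI)
    fix e assume "e \<in> edges (edge_pullback N h F)"
    then obtain x y where "e = (x, y)" "x \<in> V" "y \<in> V" "(h x, h y) \<in> edges N"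
      by (auto simp: edge_pullback_def V_def)
    then show "e \<in> (\<lambda>(u, v). (g u, g v)) ` edges (induced N (h ` V))"
      using gh by (auto simp: induced_def image_iff intro!: bexI[of _ "(h x, h y)"])
  next
    fix e assume "e \<in> (\<lambda>(u, v). (g u, g v)) ` edges (induced N (h ` V))"
    then show "e \<in> edges (edge_pullback N h F)"
      using g_in hg by (auto simp: induced_def edge_pullback_def V_def)
  qed
  moreover have "rels (edge_pullback N h F) P = map g ` rels (induced N (h ` V)) P" for P
    using rels_eq_map_inv_into[OF N F h(1) rels] N F
    by (cases "P \<in> L") (simp_all add: is_model_def edge_pullback_def induced_def g_def V_def)
  moreover have "bij_betw g (h ` V) V"
    using h(1) by (simp add: g_def V_def bij_betw_inv_into bij_betw_imageI)
  ultimately show ?thesis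
    unfolding iso_def by (auto simp: induced_def edge_pullback_def V_def)
qed

lemma not_in_forb_if_embeds:
  assumes N: "is_model L k N" and F: "is_model L k F" "F \<in> Fam"
    and h: "inj_on h (verts F)" "h ` verts F \<subseteq> verts N"
    and rels: "\<forall>P\<in>L. \<forall>\<beta>\<in>inj_tuples (verts F) (k P). \<beta> \<in> rels F P \<longleftrightarrow> map h \<beta> \<in> rels N P"
    and edges: "\<forall>(x, y)\<in>edges F. (h x, h y) \<in> edges N"
  shows "N \<notin> forb_models L k (up_E L k Fam)"
  using iso_induced_edge_pullback[OF N F(1) h rels] edge_pullback_in_up_E[OF N F edges] h(2)
  by (auto simp: forb_models_def)

definition comap_split_order :: "('u \<Rightarrow> nat) \<times> ('u \<times> 'u) set \<Rightarrow> 'v set \<Rightarrow> ('v \<Rightarrow> 'u)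
     \<Rightarrow> ('v \<Rightarrow> nat) \<times> ('v \<times> 'v) set" where
  "comap_split_order s V \<psi> =
     ((\<lambda>x. if x \<in> V then fst s (\<psi> x) else 0), {(x, y). x \<in> V \<and> y \<in> V \<and> (\<psi> x, \<psi> y) \<in> snd s})"

lemma comap_split_order_in_split_orders:
  assumes s: "s \<in> split_orders l A" and \<psi>: "inj_on \<psi> V" "\<psi> ` V \<subseteq> A"
  shows "comap_split_order s V \<psi> \<in> split_orders l V"
proof -
  obtain f r where s_eq: "s = (f, r)"
    by fastforce
  note D = split_ordersD[OF s[unfolded s_eq]]
  have in_A: "\<psi> x \<in> A" if "x \<in> V" for x
    using \<psi>(2) that by blast
  let ?f = "fst (comap_split_order s V \<psi>)" and ?r = "snd (comap_split_order s V \<psi>)"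
  have f_eq: "?f x = (if x \<in> V then f (\<psi> x) else 0)" for x
    by (simp add: comap_split_order_def s_eq)
  have r_iff: "(x, y) \<in> ?r \<longleftrightarrow> x \<in> V \<and> y \<in> V \<and> (\<psi> x, \<psi> y) \<in> r" for x y
    by (simp add: comap_split_order_def s_eq)
  have "\<forall>x\<in>V. ?f x \<in> {1..l}" "\<forall>x. x \<notin> V \<longrightarrow> ?f x = 0"
    using D(1) in_A f_eq by simp_all
  moreover have "?r \<subseteq> V \<times> V" "refl_on V ?r"
    using D(4) in_A r_iff by (auto simp: refl_on_def)
  moreover have "trans ?r"
    using D(5) r_iff unfolding trans_def by blast
  moreover have "antisym ?r"
    using D(6) inj_onD[OF \<psi>(1)] r_iff unfolding antisym_def by blast
  moreover have "\<forall>x\<in>V. \<forall>y\<in>V. ((x, y) \<in> ?r \<or> (y, x) \<in> ?r) \<longleftrightarrow> ?f x = ?f y"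
    using D(7) in_A r_iff f_eq by simp
  ultimately show ?thesis
    unfolding split_orders_def by (simp add: case_prod_beta)
qed

lemma pull_comap_split_order:
  assumes "set \<beta> \<subseteq> V"
  shows "pull (comap_split_order s V \<psi>) \<beta> = pull s (map \<psi> \<beta>)"
  using assms nth_mem by (fastforce simp: pull_def comap_split_order_def fun_eq_iff)

lemma map_image_uniform_tuples:
  assumes \<phi>: "bij_betw \<phi> W V"
  shows "map \<phi> ` {\<alpha>\<in>inj_tuples W n. pull s \<alpha> \<in> X}
    = {\<beta>\<in>inj_tuples V n. pull (comap_split_order s V (inv_into W \<phi>)) \<beta> \<in> X}"
proof -
  let ?\<psi> = "inv_into W \<phi>"
  have \<psi>: "bij_betw ?\<psi> V W"
    using \<phi> by (rule bij_betw_inv_into)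
  have \<psi>\<phi>: "map ?\<psi> (map \<phi> \<alpha>) = \<alpha>" if "set \<alpha> \<subseteq> W" for \<alpha>
    using \<phi> that unfolding map_map by (intro map_idI) (auto simp: bij_betw_def)
  have \<phi>\<psi>: "map \<phi> (map ?\<psi> \<beta>) = \<beta>" if "set \<beta> \<subseteq> V" for \<beta>
    using \<phi> that unfolding map_map by (intro map_idI) (auto simp: bij_betw_def f_inv_into_f)
  have inj_map: "map f \<alpha> \<in> inj_tuples B n" if "bij_betw f A B" "\<alpha> \<in> inj_tuples A n" for f A B \<alpha>
    using that by (auto simp: inj_tuples_def bij_betw_def distinct_map intro: inj_on_subset)
  show ?thesis
  proof (intro equalityI subsetI)
    fix \<beta> assume "\<beta> \<in> map \<phi> ` {\<alpha>\<in>inj_tuples W n. pull s \<alpha> \<in> X}"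
    then obtain \<alpha> where \<alpha>: "\<alpha> \<in> inj_tuples W n" "pull s \<alpha> \<in> X" "\<beta> = map \<phi> \<alpha>"
      by blast
    then have "\<beta> \<in> inj_tuples V n"
      using inj_map[OF \<phi>] by blast
    then show "\<beta> \<in> {\<beta>\<in>inj_tuples V n. pull (comap_split_order s V ?\<psi>) \<beta> \<in> X}"
      using \<alpha> \<psi>\<phi> by (simp add: pull_comap_split_order inj_tuples_def)
  next
    fix \<beta> assume \<beta>: "\<beta> \<in> {\<beta>\<in>inj_tuples V n. pull (comap_split_order s V ?\<psi>) \<beta> \<in> X}"
    then have "map ?\<psi> \<beta> \<in> inj_tuples W n" "pull s (map ?\<psi> \<beta>) \<in> X" "set \<beta> \<subseteq> V"
      using inj_map[OF \<psi>] by (auto simp: pull_comap_split_order inj_tuples_def)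
    then show "\<beta> \<in> map \<phi> ` {\<alpha>\<in>inj_tuples W n. pull s \<alpha> \<in> X}"
      using \<phi>\<psi> by (metis (mono_tags, lifting) image_eqI mem_Collect_eq)
  qed
qed

definition uniform_model :: "'p set \<Rightarrow> ('p \<Rightarrow> nat) \<Rightarrow> nat
     \<Rightarrow> ('p \<Rightarrow> ((nat \<Rightarrow> nat) \<times> (nat \<times> nat) set) set) \<Rightarrow> (nat \<Rightarrow> nat) \<times> (nat \<times> nat) set
     \<Rightarrow> (nat \<times> nat) set \<Rightarrow> (nat, 'p) gstr" where
  "uniform_model L k n Q s E = \<lparr>verts = {0..<n},
     rels = (\<lambda>P. if P \<in> L then {\<alpha>\<in>inj_tuples {0..<n} (k P). pull s \<alpha> \<in> Q P} else {}), edges = E\<rparr>"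

lemma uniform_comap_split_order:
  assumes \<phi>: "bij_betw \<phi> W (verts F)" and W: "W \<subseteq> {0..<n}"
    and rels: "\<forall>P\<in>L. rels F P = map \<phi> ` {\<alpha>\<in>rels (uniform_model L k n Q sN EN) P. set \<alpha> \<subseteq> W}"
  shows "uniform L k (J F) Q (comap_split_order sN (verts F) (inv_into W \<phi>))"
proof -
  have "rels F P = {\<beta>\<in>inj_tuples (verts F) (k P). pull (comap_split_order sN (verts F) (inv_into W \<phi>)) \<beta> \<in> Q P}"
    if "P \<in> L" for P
  proof -
    have "rels F P = map \<phi> ` {\<alpha>\<in>rels (uniform_model L k n Q sN EN) P. set \<alpha> \<subseteq> W}"
      using rels that by simp
    also have "{\<alpha>\<in>rels (uniform_model L k n Q sN EN) P. set \<alpha> \<subseteq> W} = {\<alpha>\<in>inj_tuples W (k P). pull sN \<alpha> \<in> Q P}"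
      using that W by (auto simp: uniform_model_def inj_tuples_def)
    finally show ?thesis
      unfolding map_image_uniform_tuples[OF \<phi>] .
  qed
  then show ?thesis
    by (simp add: uniform_def J_def)
qed

lemma uniform_model_in_forb:
  fixes Fam :: "('v, 'p) gstr set"
  assumes sN: "sN \<in> split_orders l {0..<n}"
    and EN: "EN \<subseteq> {0..<n} \<times> {0..<n}" "sym EN" "irrefl EN"
    and no_copy: "\<And>F s. F \<in> Fam \<Longrightarrow> s \<in> split_orders l (verts F) \<Longrightarrow> uniform L k (J F) Q s
      \<Longrightarrow> \<forall>(x, y)\<in>edges F. \<exists>(i, j)\<in>EN. fst s x = fst sN i \<and> fst s y = fst sN j \<Longrightarrow> False"
  shows "uniform_model L k n Q sN EN \<in> forb_models L k (up_E L k Fam)"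
proof -
  let ?N = "uniform_model L k n Q sN EN"
  have "\<not> iso (induced ?N W) G" if W: "W \<subseteq> {0..<n}" and G: "G \<in> up_E L k Fam" for W G
  proof
    assume "iso (induced ?N W) G"
    then obtain \<phi> where \<phi>: "bij_betw \<phi> W (verts G)"
      "edges G = (\<lambda>(i, j). (\<phi> i, \<phi> j)) ` (EN \<inter> W \<times> W)"
      "\<forall>P. rels G P = map \<phi> ` {\<alpha>\<in>rels ?N P. set \<alpha> \<subseteq> W}"
      by (auto simp: iso_def induced_def uniform_model_def)
    obtain F where F: "F \<in> Fam" "verts G = verts F" "edges F \<subseteq> edges G" "\<forall>P\<in>L. rels G P = rels F P"
      using G by (auto simp: up_E_def)
    define s where "s = comap_split_order sN (verts F) (inv_into W \<phi>)"
    have bij: "bij_betw \<phi> W (verts F)" "bij_betw (inv_into W \<phi>) (verts F) W"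
      using \<phi>(1) F(2) by (simp_all add: bij_betw_inv_into)
    then have "s \<in> split_orders l (verts F)"
      unfolding s_def using W
      by (intro comap_split_order_in_split_orders[OF sN]) (auto simp: bij_betw_def)
    moreover have "uniform L k (J F) Q s"
      unfolding s_def using bij(1) W F(4) \<phi>(3) by (intro uniform_comap_split_order) auto
    moreover have "\<forall>(x, y)\<in>edges F. \<exists>(i, j)\<in>EN. fst s x = fst sN i \<and> fst s y = fst sN j"
    proof (intro ballI, clarify)
      fix x y assume "(x, y) \<in> edges F"
      then obtain i j where ij: "(i, j) \<in> EN" "i \<in> W" "j \<in> W" "x = \<phi> i" "y = \<phi> j"
        using F(3) \<phi>(2) by auto
      then have "fst s x = fst sN i" "fst s y = fst sN j"
        using bij(1) by (auto simp: s_def comap_split_order_def bij_betw_def)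
      then show "\<exists>(i', j')\<in>EN. fst s x = fst sN i' \<and> fst s y = fst sN j'"
        using ij(1) by blast
    qed
    ultimately show False
      using no_copy F(1) by blast
  qed
  moreover have "is_model L k ?N"
    using EN by (auto simp: is_model_def uniform_model_def)
  ultimately show ?thesis
    by (auto simp: forb_models_def uniform_model_def)
qed

section \<open>Complete partite graphs in the forbidden class\<close>

definition admits_partite :: "'p set \<Rightarrow> ('p \<Rightarrow> nat) \<Rightarrow> ('v, 'p) gstr set \<Rightarrow> nat \<Rightarrow> bool" where
  "admits_partite L k Fam l \<longleftrightarrow> (\<forall>n. \<exists>N\<in>forb_models L k (up_E L k Fam).
     card (verts N) = n \<and> contains_partite n l (edges N) (verts N))"

definition residue_split_order :: "nat \<Rightarrow> nat \<Rightarrow> (nat \<Rightarrow> nat) \<times> (nat \<times> nat) set" where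
  "residue_split_order l n = ((\<lambda>i. if i < n then i mod l + 1 else 0),
     {(i, j). i < n \<and> j < n \<and> i mod l = j mod l \<and> i \<le> j})"

definition partite_edges :: "nat \<Rightarrow> nat \<Rightarrow> (nat \<times> nat) set" where
  "partite_edges l n = {(i, j). i < n \<and> j < n \<and> i mod l \<noteq> j mod l}"

lemma residue_split_order_in_split_orders:
  assumes "1 \<le> l"
  shows "residue_split_order l n \<in> split_orders l {0..<n}"
  using assms by (auto simp: split_orders_def residue_split_order_def refl_on_def trans_def antisym_def
      Suc_le_eq)

lemma partite_edges_graph:
  "partite_edges l n \<subseteq> {0..<n} \<times> {0..<n}" "sym (partite_edges l n)" "irrefl (partite_edges l n)"
  by (auto simp: partite_edges_def sym_def irrefl_def)

lemma admits_partite_if_uniform_models: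
  assumes "\<And>n. uniform_model L k n Q (s n) (E n) \<in> forb_models L k (up_E L k Fam)"
    and "\<And>n. contains_partite n l (E n) {0..<n}"
  shows "admits_partite L k Fam l"
  unfolding admits_partite_def
proof
  fix n
  show "\<exists>N\<in>forb_models L k (up_E L k Fam). card (verts N) = n \<and> contains_partite n l (edges N) (verts N)"
    using assms[of n] by (intro bexI[of _ "uniform_model L k n Q (s n) (E n)"]) (auto simp: uniform_model_def)
qed

lemma admits_partite_if_not_chiE:
  assumes "1 \<le> l" and "\<not> ramsey_patterns l L k \<subseteq> chiE_fam l L k Fam"
  shows "admits_partite L k Fam l"
proof -
  obtain Q where Q: "Q \<in> ramsey_patterns l L k" "Q \<notin> chiE_fam l L k Fam"
    using assms(2) by blast
  have "uniform_model L k n Q (residue_split_order l n) (partite_edges l n) \<in> forb_models L k (up_E L k Fam)"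
    for n
  proof (rule uniform_model_in_forb[OF residue_split_order_in_split_orders[OF assms(1)] partite_edges_graph])
    fix F s
    assume F: "F \<in> Fam" "s \<in> split_orders l (verts F)" "uniform L k (J F) Q s"
      and edges: "\<forall>(x, y)\<in>edges F. \<exists>(i, j)\<in>partite_edges l n.
        fst s x = fst (residue_split_order l n) i \<and> fst s y = fst (residue_split_order l n) j"
    have "\<forall>(x, y)\<in>edges F. fst s x \<noteq> fst s y"
      using edges by (fastforce simp: partite_edges_def residue_split_order_def)
    then have "Q \<in> chiE l L k F"
      using Q(1) F(2,3) by (auto simp: chiE_def)
    then show False
      using Q(2) F(1) by (auto simp: chiE_fam_def)
  qed
  moreover have "contains_partite n l (partite_edges l n) {0..<n}" for n
    unfolding contains_partite_def by (intro exI[of _ id]) (auto simp: partite_edges_def)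
  ultimately show ?thesis
    by (rule admits_partite_if_uniform_models)
qed

lemma admits_partite_if_not_U1:
  assumes "\<not> ramsey_patterns 1 L k \<subseteq> U_fam 1 L k (J ` Fam)"
  shows "admits_partite L k Fam l"
proof -
  obtain Q where Q: "Q \<in> ramsey_patterns 1 L k" "Q \<notin> U_fam 1 L k (J ` Fam)"
    using assms by blast
  have "uniform_model L k n Q (residue_split_order 1 n) (partite_edges n n) \<in> forb_models L k (up_E L k Fam)"
    for n
  proof (rule uniform_model_in_forb[OF residue_split_order_in_split_orders[OF order_refl] partite_edges_graph])
    fix F s
    assume F: "F \<in> Fam" "s \<in> split_orders 1 (verts F)" "uniform L k (J F) Q s"
      and "\<forall>(x, y)\<in>edges F. \<exists>(i, j)\<in>partite_edges n n.
        fst s x = fst (residue_split_order 1 n) i \<and> fst s y = fst (residue_split_order 1 n) j"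
    have "Q \<in> U 1 L k (J F)"
      using Q(1) F(2,3) by (auto simp: U_def J_def)
    then show False
      using Q(2) F(1) by (auto simp: U_fam_def)
  qed
  moreover have "contains_partite n l (partite_edges n n) {0..<n}" for n
    unfolding contains_partite_def by (intro exI[of _ id]) (auto simp: partite_edges_def)
  ultimately show ?thesis
    by (rule admits_partite_if_uniform_models)
qed

text \<open>
  Vertex \<open>x\<close> goes to position \<open>t x * l + c x\<close>: its residue \<open>c x\<close> separates adjacent vertices, and
  the quotient \<open>t x\<close> keeps the map injective.
\<close>

lemma not_in_forb_if_partite_copy:
  fixes t c :: "'v \<Rightarrow> nat" and F :: "('v, 'p) gstr"
  assumes N: "is_model L k N" and F: "is_model L k F" "F \<in> Fam"
    and g: "inj_on g {0..<l' * M}" "g ` {0..<l' * M} \<subseteq> verts N"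
      "\<forall>i<l' * M. \<forall>j<l' * M. i mod l' \<noteq> j mod l' \<longrightarrow> (g i, g j) \<in> edges N"
    and t: "inj_on t (verts F)" "t ` verts F \<subseteq> {..<M}"
    and c: "\<forall>x\<in>verts F. c x < l'" "\<forall>(x, y)\<in>edges F. c x \<noteq> c y"
    and rels: "\<forall>P\<in>L. \<forall>\<beta>\<in>inj_tuples (verts F) (k P). \<beta> \<in> rels F P \<longleftrightarrow> map (\<lambda>x. g (t x * l' + c x)) \<beta> \<in> rels N P"
  shows "N \<notin> forb_models L k (up_E L k Fam)"
proof -
  let ?idx = "\<lambda>x. t x * l' + c x"
  have idx: "?idx x mod l' = c x" "?idx x div l' = t x" "?idx x < l' * M" if "x \<in> verts F" for x
    using c(1) t(2) that mult_add_less_mult_add[of "t x" M "c x" l' 0] by (auto simp: mult.commute)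
  have "inj_on (g \<circ> ?idx) (verts F)"
  proof (rule comp_inj_on)
    show "inj_on ?idx (verts F)"
      using t(1) idx(2) unfolding inj_on_def by metis
    show "inj_on g (?idx ` verts F)"
      using g(1) idx(3) by (auto intro: inj_on_subset)
  qed
  moreover have "(g \<circ> ?idx) ` verts F \<subseteq> verts N"
    using g(2) idx(3) by auto
  moreover have "\<forall>(x, y)\<in>edges F. ((g \<circ> ?idx) x, (g \<circ> ?idx) y) \<in> edges N"
  proof (clarify)
    fix x y assume xy: "(x, y) \<in> edges F"
    then have "x \<in> verts F" "y \<in> verts F"
      using F(1) by (auto simp: is_model_def)
    then show "((g \<circ> ?idx) x, (g \<circ> ?idx) y) \<in> edges N"
      using g(3) idx c(2) xy by auto
  qed
  ultimately show ?thesis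
    using not_in_forb_if_embeds[OF N F] rels by (simp add: comp_def)
qed

definition coloured_copy :: "'p set \<Rightarrow> ('p \<Rightarrow> nat) \<Rightarrow> ('v, 'p) gstr set \<Rightarrow> nat \<Rightarrow> nat
     \<Rightarrow> (nat \<times> nat \<Rightarrow> 'w) \<Rightarrow> ('p \<Rightarrow> 'w list set) \<Rightarrow> bool" where
  "coloured_copy L k Fam l M a R \<longleftrightarrow> (\<exists>F\<in>Fam. \<exists>t c.
     inj_on t (verts F) \<and> t ` verts F \<subseteq> {..<M} \<and> (\<forall>x\<in>verts F. c x < l) \<and> (\<forall>(x, y)\<in>edges F. c x \<noteq> c y)
     \<and> (\<forall>P\<in>L. \<forall>\<beta>\<in>inj_tuples (verts F) (k P). \<beta> \<in> rels F P \<longleftrightarrow> map (\<lambda>x. a (c x, t x)) \<beta> \<in> R P))"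

lemma not_admits_partite_if_coloured_copies:
  fixes Fam :: "('v, 'p) gstr set"
  assumes models: "\<forall>F\<in>Fam. is_model L k F"
    and copies: "\<And>(a :: nat \<times> nat \<Rightarrow> nat) R. coloured_copy L k Fam l M a R"
  shows "\<not> admits_partite L k Fam l"
proof
  assume "admits_partite L k Fam l"
  then obtain N where N: "N \<in> forb_models L k (up_E L k Fam)"
    and "contains_partite (l * M) l (edges N) (verts N)"
    by (auto simp: admits_partite_def)
  then obtain g where g: "inj_on g {0..<l * M}" "g ` {0..<l * M} \<subseteq> verts N"
      "\<forall>i<l * M. \<forall>j<l * M. i mod l \<noteq> j mod l \<longrightarrow> (g i, g j) \<in> edges N"
    by (auto simp: contains_partite_def)
  obtain F t c where F: "F \<in> Fam" and t: "inj_on t (verts F)" "t ` verts F \<subseteq> {..<M}"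
    and c: "\<forall>x\<in>verts F. c x < l" "\<forall>(x, y)\<in>edges F. c x \<noteq> c y"
    and rels: "\<forall>P\<in>L. \<forall>\<beta>\<in>inj_tuples (verts F) (k P). \<beta> \<in> rels F P \<longleftrightarrow> map (\<lambda>x. g (t x * l + c x)) \<beta> \<in> rels N P"
    using copies[of "\<lambda>(c, t). g (t * l + c)" "rels N"] by (auto simp: coloured_copy_def)
  have "is_model L k N" "is_model L k F"
    using N models F by (auto simp: forb_models_def)
  from not_in_forb_if_partite_copy[OF this F g t c rels] N
  show False ..
qed

lemma coloured_copy_if_proper_uniform_copy:
  assumes models: "\<forall>F\<in>Fam. is_model L k F" and "l \<le> l'"
    and copy: "uniform_copy L k l Fam (\<lambda>F s. \<forall>(x, y)\<in>edges F. fst s x \<noteq> fst s y) M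
      (\<lambda>(j, t). a (j - 1, t)) R"
  shows "coloured_copy L k Fam l' M a R"
proof -
  obtain F s t where F: "F \<in> Fam" and s: "s \<in> split_orders l (verts F)"
    and proper: "\<forall>(x, y)\<in>edges F. fst s x \<noteq> fst s y"
    and t: "inj_on t (verts F)" "t ` verts F \<subseteq> {..<M}"
    and rels: "\<forall>P\<in>L. \<forall>\<beta>\<in>inj_tuples (verts F) (k P). \<beta> \<in> rels F P \<longleftrightarrow> map (\<lambda>x. a (fst s x - 1, t x)) \<beta> \<in> R P"
    using copy by (auto simp: uniform_copy_def)
  have colour: "1 \<le> fst s x \<and> fst s x \<le> l" if "x \<in> verts F" for x
    using s that by (auto simp: split_orders_def)
  have "\<forall>x\<in>verts F. fst s x - 1 < l'"
    using colour \<open>l \<le> l'\<close> by fastforce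
  moreover have "\<forall>(x, y)\<in>edges F. fst s x - 1 \<noteq> fst s y - 1"
  proof (clarify)
    fix x y assume xy: "(x, y) \<in> edges F" "fst s x - 1 = fst s y - 1"
    then have "x \<in> verts F" "y \<in> verts F"
      using models F by (auto simp: is_model_def)
    then have "fst s x = fst s y"
      using xy(2) colour[of x] colour[of y] by linarith
    then show False
      using bspec[OF proper xy(1)] by simp
  qed
  ultimately show ?thesis
    unfolding coloured_copy_def using F t rels
    by (intro bexI[OF _ F] exI[of _ t] exI[of _ "\<lambda>x. fst s x - 1"]) simp
qed

text \<open>With \<open>Suc M\<close> parts, colouring a vertex by its position \<open>t x < M\<close> separates any two vertices.\<close>

lemma coloured_copy_if_uniform_copy:
  assumes models: "\<forall>F\<in>Fam. is_model L k F"
    and copy: "uniform_copy L k l Fam C M (\<lambda>(j, t). a (t, t)) R"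
  shows "coloured_copy L k Fam (Suc M) M a R"
proof -
  obtain F t where F: "F \<in> Fam" and t: "inj_on t (verts F)" "t ` verts F \<subseteq> {..<M}"
    and rels: "\<forall>P\<in>L. \<forall>\<beta>\<in>inj_tuples (verts F) (k P). \<beta> \<in> rels F P \<longleftrightarrow> map (\<lambda>x. a (t x, t x)) \<beta> \<in> R P"
    using copy by (auto simp: uniform_copy_def)
  have "\<forall>(x, y)\<in>edges F. t x \<noteq> t y"
  proof (clarify)
    fix x y assume xy: "(x, y) \<in> edges F" "t x = t y"
    then have "x \<in> verts F" "y \<in> verts F" "x \<noteq> y"
      using models F by (auto simp: is_model_def irrefl_def)
    then show False
      using inj_onD[OF t(1) xy(2)] by blast
  qed
  moreover have "\<forall>x\<in>verts F. t x < Suc M"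
    using t(2) by auto
  ultimately show ?thesis
    unfolding coloured_copy_def using F t rels by (intro bexI[OF _ F] exI[of _ t] exI[of _ t]) simp
qed

lemma not_admits_partite_if_chiE:
  fixes Fam :: "('v, 'p) gstr set"
  assumes "finite L" and models: "\<forall>F\<in>Fam. is_model L k F"
    and covered: "ramsey_patterns l L k \<subseteq> chiE_fam l L k Fam" and "l \<le> l'"
  shows "\<not> admits_partite L k Fam l'"
proof -
  let ?proper = "\<lambda>F s. \<forall>(x, y)\<in>edges F. fst s x \<noteq> fst s y"
  have "\<forall>Q\<in>ramsey_patterns l L k. \<exists>F\<in>Fam. \<exists>s\<in>split_orders l (verts F). uniform L k (J F) Q s \<and> ?proper F s"
  proof
    fix Q assume "Q \<in> ramsey_patterns l L k"
    then obtain F where "F \<in> Fam" "Q \<in> chiE l L k F"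
      using covered by (auto simp: chiE_fam_def)
    then show "\<exists>F\<in>Fam. \<exists>s\<in>split_orders l (verts F). uniform L k (J F) Q s \<and> ?proper F s"
      by (auto simp: chiE_def)
  qed
  moreover have "\<forall>F\<in>Fam. finite (verts F)"
    using models by (simp add: is_model_def)
  ultimately have "\<exists>M. \<forall>(a :: nat \<times> nat \<Rightarrow> nat) R. uniform_copy L k l Fam ?proper M a R"
    by (rule ramsey_uniform_copy[OF \<open>finite L\<close>, rotated])
  then obtain M where M: "\<forall>(a :: nat \<times> nat \<Rightarrow> nat) R. uniform_copy L k l Fam ?proper M a R" ..
  have "coloured_copy L k Fam l' M a R" for a :: "nat \<times> nat \<Rightarrow> nat" and R
    using M coloured_copy_if_proper_uniform_copy[OF models \<open>l \<le> l'\<close>] by blast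
  then show ?thesis
    by (rule not_admits_partite_if_coloured_copies[OF models])
qed

lemma not_admits_partite_if_U1:
  fixes Fam :: "('v, 'p) gstr set"
  assumes "finite L" and models: "\<forall>F\<in>Fam. is_model L k F"
    and covered: "ramsey_patterns 1 L k \<subseteq> U_fam 1 L k (J ` Fam)"
  shows "\<exists>l\<ge>1. \<not> admits_partite L k Fam l"
proof -
  have "\<forall>Q\<in>ramsey_patterns 1 L k. \<exists>F\<in>Fam. \<exists>s\<in>split_orders 1 (verts F). uniform L k (J F) Q s \<and> True"
  proof
    fix Q assume "Q \<in> ramsey_patterns 1 L k"
    then obtain F where "F \<in> Fam" "Q \<in> U 1 L k (J F)"
      using covered by (auto simp: U_fam_def)
    then show "\<exists>F\<in>Fam. \<exists>s\<in>split_orders 1 (verts F). uniform L k (J F) Q s \<and> True"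
      by (auto simp: U_def J_def)
  qed
  moreover have "\<forall>F\<in>Fam. finite (verts F)"
    using models by (simp add: is_model_def)
  ultimately have "\<exists>M. \<forall>(a :: nat \<times> nat \<Rightarrow> nat) R. uniform_copy L k 1 Fam (\<lambda>_ _. True) M a R"
    by (rule ramsey_uniform_copy[OF \<open>finite L\<close>, rotated])
  then obtain M where M: "\<forall>(a :: nat \<times> nat \<Rightarrow> nat) R. uniform_copy L k 1 Fam (\<lambda>_ _. True) M a R" ..
  have "coloured_copy L k Fam (Suc M) M a R" for a :: "nat \<times> nat \<Rightarrow> nat" and R
    using M coloured_copy_if_uniform_copy[OF models] by blast
  then have "\<not> admits_partite L k Fam (Suc M)"
    by (rule not_admits_partite_if_coloured_copies[OF models])
  then show ?thesis
    by (intro exI[of _ "Suc M"]) simp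
qed

section \<open>The chromatic threshold\<close>

lemma threshold_set_eq_lessThan:
  fixes A :: "nat \<Rightarrow> bool"
  assumes "1 \<le> m" and below: "\<And>l. 1 \<le> l \<Longrightarrow> l < m \<Longrightarrow> A l" and above: "\<And>l. m \<le> l \<Longrightarrow> \<not> A l"
  shows "{l. 1 \<le> l \<and> A l} \<union> {0} = {..<m}"
proof (intro equalityI subsetI)
  fix l assume "l \<in> {l. 1 \<le> l \<and> A l} \<union> {0}"
  then show "l \<in> {..<m}"
    using above[of l] \<open>1 \<le> m\<close> by (cases "m \<le> l") auto
next
  fix l assume "l \<in> {..<m}"
  then show "l \<in> {l. 1 \<le> l \<and> A l} \<union> {0}"
    using below[of l] by (cases "l = 0") auto
qed

lemma Sup_enat_threshold_eq_Inf:
  fixes A :: "nat \<Rightarrow> bool" and S :: "nat set"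
  assumes "0 \<notin> S"
    and below: "\<And>l. 1 \<le> l \<Longrightarrow> l \<notin> S \<Longrightarrow> A l"
    and above: "\<And>l l'. l \<in> S \<Longrightarrow> l \<le> l' \<Longrightarrow> \<not> A l'"
  shows "Sup (enat ` ({l. 1 \<le> l \<and> A l} \<union> {0})) + 1 = (INF l\<in>S. enat l)"
proof (cases "S = {}")
  case True
  then have "{l. 1 \<le> l \<and> A l} \<union> {0} = UNIV"
    using below by auto
  moreover have "infinite (range enat)"
    by (simp add: finite_image_iff inj_on_def)
  ultimately show ?thesis
    using True by (simp add: Sup_enat_def top_enat_def)
next
  case False
  define m where "m = (LEAST l. l \<in> S)"
  have m: "m \<in> S" "\<And>l. l \<in> S \<Longrightarrow> m \<le> l"
    using False by (auto simp: m_def intro: LeastI Least_le)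
  then have "1 \<le> m"
    using \<open>0 \<notin> S\<close> by (cases m) auto
  have "{l. 1 \<le> l \<and> A l} \<union> {0} = {..<m}"
    using below m above[OF m(1)] by (intro threshold_set_eq_lessThan[OF \<open>1 \<le> m\<close>]) (auto simp: not_le[symmetric])
  moreover have "Sup (enat ` {..<m}) = enat (m - 1)"
    using \<open>1 \<le> m\<close> by (intro antisym Sup_least Sup_upper) auto
  moreover have "(INF l\<in>S. enat l) = enat m"
    using m by (intro antisym INF_lower INF_greatest) auto
  ultimately show ?thesis
    using \<open>1 \<le> m\<close> by (simp add: one_enat_def)
qed

lemma INF_enat_less_infinity_iff: "(INF l\<in>S. enat l) < \<infinity> \<longleftrightarrow> S \<noteq> {}"
proof (cases "S = {}")
  case False
  then obtain l where "l \<in> S"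
    by blast
  then have "(INF l\<in>S. enat l) < \<infinity>"
    using INF_lower[of l S enat] le_less_trans by fastforce
  then show ?thesis
    using False by simp
qed (simp add: top_enat_def)

theorem theorem3p6:
  fixes L :: "'p set" and k :: "'p \<Rightarrow> nat" and Fam :: "('v, 'p) gstr set"
  assumes "finite L"
    and "\<forall>F\<in>Fam. is_model L k F"
  shows "chi L k Fam = (INF l\<in>{l. l \<ge> 1 \<and> ramsey_patterns l L k \<subseteq> chiE_fam l L k Fam}. enat l)
     \<and> (chi L k Fam < \<infinity> \<longleftrightarrow> ramsey_patterns 1 L k \<subseteq> U_fam 1 L k (J ` Fam))"
proof -
  define S where "S = {l. l \<ge> 1 \<and> ramsey_patterns l L k \<subseteq> chiE_fam l L k Fam}"
  have below: "\<And>l. 1 \<le> l \<Longrightarrow> l \<notin> S \<Longrightarrow> admits_partite L k Fam l"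
    by (simp add: S_def admits_partite_if_not_chiE)
  have above: "\<And>l l'. l \<in> S \<Longrightarrow> l \<le> l' \<Longrightarrow> \<not> admits_partite L k Fam l'"
    using not_admits_partite_if_chiE[OF assms] unfolding S_def by blast
  have chi_eq: "chi L k Fam = (INF l\<in>S. enat l)"
    using Sup_enat_threshold_eq_Inf[of S, OF _ below above] by (simp add: chi_def admits_partite_def S_def)
  have "S \<noteq> {} \<longleftrightarrow> ramsey_patterns 1 L k \<subseteq> U_fam 1 L k (J ` Fam)"
  proof
    assume "S \<noteq> {}"
    then obtain l where "l \<in> S"
      by blast
    then show "ramsey_patterns 1 L k \<subseteq> U_fam 1 L k (J ` Fam)"
      using admits_partite_if_not_U1[of L k Fam l] above[OF _ order_refl] by blast
  next
    assume "ramsey_patterns 1 L k \<subseteq> U_fam 1 L k (J ` Fam)"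
    then obtain l where "1 \<le> l" "\<not> admits_partite L k Fam l"
      using not_admits_partite_if_U1[OF assms] by blast
    then show "S \<noteq> {}"
      using below by blast
  qed
  then show ?thesis
    using chi_eq INF_enat_less_infinity_iff[of S] by (simp add: S_def)
qed

end
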